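(* Let $(\Omega,\mathcal F,(\mathcal F_t)_{t\ge0},\mathbb P)$ be a filtered probability space and $B$ a one-dimensional $(\mathcal F_t)$-Wiener process. Let $b=b(t,\omega)$ be an $(\mathcal F_t)_t$-adapted (progressively measurable) real-valued stochastic process, and let $C>0$, $\beta>0$ be constants such that $$\mathbb E\, b^2(t)\le C(1+t^{2\beta}),\qquad t\ge 0.$$ Then for every $\gamma>\beta+\tfrac12$, almost surely $$\frac{1}{t^{\gamma}}\int_0^t b(s)\,dB(s)\to 0,\qquad t\to\infty.$$ *)

theory Defs
  imports "HOL-Probability.Probability"
begin

text \<open>Filtered probability space: M a probability space, F a filtration of sub-sigma-algebras
  of M (indexed by real time; only times t \<ge> 0 are relevant).\<close>
definition filtered_prob_space :: "'a measure \<Rightarrow> (real \<Rightarrow> 'a measure) \<Rightarrow> bool" where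
  "filtered_prob_space M F \<longleftrightarrow> prob_space M \<and> filtration (space M) F \<and>
     (\<forall>t. sets (F t) \<subseteq> sets M)"

definition wiener_process :: "'a measure \<Rightarrow> (real \<Rightarrow> 'a measure) \<Rightarrow> (real \<Rightarrow> 'a \<Rightarrow> real) \<Rightarrow> bool" where
  "wiener_process M F B \<longleftrightarrow>
     (\<forall>t\<ge>0. B t \<in> borel_measurable (F t)) \<and>
     (\<forall>\<omega>\<in>space M. B 0 \<omega> = 0) \<and>
     (\<forall>\<omega>\<in>space M. continuous_on {0..} (\<lambda>t. B t \<omega>)) \<and>
     (\<forall>s t A U. 0 \<le> s \<and> s < t \<and> A \<in> sets (F s) \<and> U \<in> sets borel \<longrightarrow>
        measure M (A \<inter> {\<omega>\<in>space M. B t \<omega> - B s \<omega> \<in> U}) =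
        measure M A * measure (density lborel (normal_density 0 (sqrt (t - s)))) U)"

definition progressive :: "(real \<Rightarrow> 'a measure) \<Rightarrow> (real \<Rightarrow> 'a \<Rightarrow> real) \<Rightarrow> bool" where
  "progressive F b \<longleftrightarrow>
     (\<forall>t\<ge>0. (\<lambda>(s, \<omega>). b s \<omega>) \<in> borel_measurable (restrict_space borel {0..t} \<Otimes>\<^sub>M F t))"

definition simple_process :: "'a measure \<Rightarrow> (real \<Rightarrow> 'a measure) \<Rightarrow> real \<Rightarrow> nat \<Rightarrow> (nat \<Rightarrow> real)
    \<Rightarrow> (nat \<Rightarrow> 'a \<Rightarrow> real) \<Rightarrow> bool" where
  "simple_process M F T n tk \<xi> \<longleftrightarrow> tk 0 = 0 \<and> tk n = T \<and> (\<forall>k<n. tk k < tk (Suc k)) \<and>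
     (\<forall>k<n. \<xi> k \<in> borel_measurable (F (tk k)) \<and> integrable M (\<lambda>\<omega>. (\<xi> k \<omega>)\<^sup>2))"

definition simple_val :: "nat \<Rightarrow> (nat \<Rightarrow> real) \<Rightarrow> (nat \<Rightarrow> 'a \<Rightarrow> real) \<Rightarrow> real \<Rightarrow> 'a \<Rightarrow> real" where
  "simple_val n tk \<xi> s \<omega> = (\<Sum>k<n. if tk k \<le> s \<and> s < tk (Suc k) then \<xi> k \<omega> else 0)"

definition simple_int :: "(real \<Rightarrow> 'a \<Rightarrow> real) \<Rightarrow> nat \<Rightarrow> (nat \<Rightarrow> real) \<Rightarrow> (nat \<Rightarrow> 'a \<Rightarrow> real) \<Rightarrow> 'a \<Rightarrow> real" where
  "simple_int B n tk \<xi> \<omega> = (\<Sum>k<n. \<xi> k \<omega> * (B (tk (Suc k)) \<omega> - B (tk k) \<omega>))"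

text \<open>X is (a version of) the Ito integral of b over [0,T]: the L^2(P) limit of the Ito
  integrals of simple adapted processes converging to b in L^2([0,T] \<times> \<Omega>).\<close>
definition ito_integral_at :: "'a measure \<Rightarrow> (real \<Rightarrow> 'a measure) \<Rightarrow> (real \<Rightarrow> 'a \<Rightarrow> real)
    \<Rightarrow> (real \<Rightarrow> 'a \<Rightarrow> real) \<Rightarrow> real \<Rightarrow> ('a \<Rightarrow> real) \<Rightarrow> bool" where
  "ito_integral_at M F B b T X \<longleftrightarrow> X \<in> borel_measurable M \<and>
     (\<exists>n tk \<xi>. (\<forall>m. simple_process M F T (n m) (tk m) (\<xi> m)) \<and>
        ((\<lambda>m. \<integral>\<^sup>+\<omega>. (\<integral>\<^sup>+s\<in>{0..T}. ennreal ((simple_val (n m) (tk m) (\<xi> m) s \<omega> - b s \<omega>)\<^sup>2) \<partial>lborel) \<partial>M)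
           \<longlonglongrightarrow> 0) \<and>
        ((\<lambda>m. \<integral>\<^sup>+\<omega>. ennreal ((X \<omega> - simple_int B (n m) (tk m) (\<xi> m) \<omega>)\<^sup>2) \<partial>M) \<longlonglongrightarrow> 0))"

text \<open>The Ito integral process t \<mapsto> \<integral>_0^t b dB, taken in its (a.s.) continuous version.\<close>
definition ito_integral_process :: "'a measure \<Rightarrow> (real \<Rightarrow> 'a measure) \<Rightarrow> (real \<Rightarrow> 'a \<Rightarrow> real)
    \<Rightarrow> (real \<Rightarrow> 'a \<Rightarrow> real) \<Rightarrow> (real \<Rightarrow> 'a \<Rightarrow> real) \<Rightarrow> bool" where
  "ito_integral_process M F B b I \<longleftrightarrow>
     (\<forall>T\<ge>0. ito_integral_at M F B b T (I T)) \<and>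
     (AE \<omega> in M. continuous_on {0..} (\<lambda>t. I t \<omega>))"

end

theory Submission
  imports Defs
begin

text \<open>For adapted step processes the Ito isometry holds, and the step integrals stopped at
  increasing times form an L2 martingale, so Doob's maximal inequality applies to them. Passing to
  the L2 limit that defines the Ito integral I gives, for every finite grid in [0, T],
  P(max |I(t_i)| > c) \<le> 8 / c^2 * E (int_0^T b(s)^2 ds), and by continuity of the paths the same
  bound controls the supremum of |I| over [0, T]. The moment hypothesis bounds the right-hand
  side by 16 C T^(2 \<beta> + 1) / c^2. On the dyadic blocks [2^k, 2^(k+1)] with thresholds
  c = 2^(\<theta> k), where \<beta> + 1/2 < \<theta> < \<gamma>, these probabilities are summable; by Borel-Cantelli
  almost every path satisfies |I(t)| \<le> 2^(\<theta> k) \<le> t^\<theta> on all but finitely many blocks, and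
  \<theta> < \<gamma> gives the claim.\<close>

section \<open>Second moments and Doob's maximal inequality\<close>

lemma integrable_mult_square_integrable:
  fixes f g :: "'a \<Rightarrow> real"
  assumes "f \<in> borel_measurable M" "g \<in> borel_measurable M"
    and "integrable M (\<lambda>x. (f x)\<^sup>2)" "integrable M (\<lambda>x. (g x)\<^sup>2)"
  shows "integrable M (\<lambda>x. f x * g x)"
proof (rule Bochner_Integration.integrable_bound)
  show "integrable M (\<lambda>x. (f x)\<^sup>2 + (g x)\<^sup>2)"
    using assms by auto
  have "\<bar>f x * g x\<bar> \<le> (f x)\<^sup>2 + (g x)\<^sup>2" for x
  proof -
    have "2 * (\<bar>f x\<bar> * \<bar>g x\<bar>) \<le> (f x)\<^sup>2 + (g x)\<^sup>2"
      using sum_squares_bound[of "\<bar>f x\<bar>" "\<bar>g x\<bar>"] by (simp add: mult.assoc)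
    moreover have "0 \<le> \<bar>f x\<bar> * \<bar>g x\<bar>"
      by simp
    ultimately show ?thesis
      unfolding abs_mult by linarith
  qed
  then show "AE x in M. norm (f x * g x) \<le> norm ((f x)\<^sup>2 + (g x)\<^sup>2)"
    by simp
qed (use assms in auto)

lemma square_diff_le: "((x::real) - y)\<^sup>2 \<le> 2 * (x - z)\<^sup>2 + 2 * (z - y)\<^sup>2"
  using sum_squares_bound[of "x - z" "z - y"] by (simp add: power2_eq_square algebra_simps)

lemma ennreal_square_diff_le:
  "ennreal (((x::real) - y)\<^sup>2) \<le> 2 * ennreal ((x - z)\<^sup>2) + 2 * ennreal ((z - y)\<^sup>2)"
  using ennreal_leI[OF square_diff_le[of x y z]] by (simp add: ennreal_plus ennreal_mult)

lemma nn_integral_square_diff_le: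
  fixes X Y Z :: "'a \<Rightarrow> real"
  assumes "X \<in> borel_measurable M" "Y \<in> borel_measurable M" "Z \<in> borel_measurable M"
  shows "(\<integral>\<^sup>+\<omega>. ennreal ((X \<omega> - Z \<omega>)\<^sup>2) \<partial>M) \<le>
    2 * (\<integral>\<^sup>+\<omega>. ennreal ((X \<omega> - Y \<omega>)\<^sup>2) \<partial>M) + 2 * (\<integral>\<^sup>+\<omega>. ennreal ((Y \<omega> - Z \<omega>)\<^sup>2) \<partial>M)"
proof -
  have "(\<integral>\<^sup>+\<omega>. ennreal ((X \<omega> - Z \<omega>)\<^sup>2) \<partial>M) \<le>
      (\<integral>\<^sup>+\<omega>. 2 * ennreal ((X \<omega> - Y \<omega>)\<^sup>2) + 2 * ennreal ((Y \<omega> - Z \<omega>)\<^sup>2) \<partial>M)"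
    by (intro nn_integral_mono ennreal_square_diff_le)
  also have "\<dots> = 2 * (\<integral>\<^sup>+\<omega>. ennreal ((X \<omega> - Y \<omega>)\<^sup>2) \<partial>M) + 2 * (\<integral>\<^sup>+\<omega>. ennreal ((Y \<omega> - Z \<omega>)\<^sup>2) \<partial>M)"
    using assms by (simp add: nn_integral_add nn_integral_cmult)
  finally show ?thesis .
qed

lemma emeasure_abs_ge_le_nn_integral_square:
  fixes Y :: "'a \<Rightarrow> real"
  assumes [measurable]: "Y \<in> borel_measurable M" and "0 < c"
  shows "emeasure M {x\<in>space M. c \<le> \<bar>Y x\<bar>} \<le> ennreal (1 / c\<^sup>2) * (\<integral>\<^sup>+x. ennreal ((Y x)\<^sup>2) \<partial>M)"
proof -
  have "c \<le> \<bar>y\<bar> \<longleftrightarrow> 1 \<le> ennreal (1 / c\<^sup>2) * ennreal (y\<^sup>2)" for y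
  proof -
    have "c \<le> \<bar>y\<bar> \<longleftrightarrow> c\<^sup>2 \<le> y\<^sup>2"
      using \<open>0 < c\<close> by (metis abs_le_square_iff abs_of_pos)
    also have "\<dots> \<longleftrightarrow> 1 \<le> 1 / c\<^sup>2 * y\<^sup>2"
      using \<open>0 < c\<close> by (simp add: field_simps)
    also have "\<dots> \<longleftrightarrow> 1 \<le> ennreal (1 / c\<^sup>2) * ennreal (y\<^sup>2)"
      by (simp add: ennreal_mult[symmetric])
    finally show ?thesis .
  qed
  then have "{x\<in>space M. c \<le> \<bar>Y x\<bar>} = {x\<in>space M. 1 \<le> ennreal (1 / c\<^sup>2) * ennreal ((Y x)\<^sup>2)}"
    by auto
  also have "emeasure M \<dots> \<le> ennreal (1 / c\<^sup>2) * (\<integral>\<^sup>+x. ennreal ((Y x)\<^sup>2) * indicator (space M) x \<partial>M)"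
    using nn_integral_Markov_inequality[of "\<lambda>x. ennreal ((Y x)\<^sup>2)" "space M" M "ennreal (1 / c\<^sup>2)"]
    by simp
  also have "(\<integral>\<^sup>+x. ennreal ((Y x)\<^sup>2) * indicator (space M) x \<partial>M) = (\<integral>\<^sup>+x. ennreal ((Y x)\<^sup>2) \<partial>M)"
    by (intro nn_integral_cong) simp
  finally show ?thesis .
qed

lemma integral_square_indicator_le_orthogonal:
  fixes X Y :: "'a \<Rightarrow> real"
  assumes sub: "subalgebra M G"
    and X: "X \<in> borel_measurable G" "integrable M (\<lambda>\<omega>. (X \<omega>)\<^sup>2)"
    and Y: "Y \<in> borel_measurable M" "integrable M (\<lambda>\<omega>. (Y \<omega>)\<^sup>2)"
    and orth: "\<And>Z. Z \<in> borel_measurable G \<Longrightarrow> integrable M (\<lambda>\<omega>. (Z \<omega>)\<^sup>2) \<Longrightarrow>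
      (\<integral>\<omega>. (Y \<omega> - X \<omega>) * Z \<omega> \<partial>M) = 0"
    and A: "A \<in> sets G"
  shows "(\<integral>\<omega>. (X \<omega>)\<^sup>2 * indicator A \<omega> \<partial>M) \<le> (\<integral>\<omega>. (Y \<omega>)\<^sup>2 * indicator A \<omega> \<partial>M)"
proof -
  have XM: "X \<in> borel_measurable M" and AM: "A \<in> sets M"
    using X(1) A measurable_from_subalg[OF sub] sub by (auto simp: subalgebra_def)
  define Z where "Z \<omega> = X \<omega> * indicator A \<omega>" for \<omega>
  have Z_sq: "(Z \<omega>)\<^sup>2 = (X \<omega>)\<^sup>2 * indicator A \<omega>" for \<omega>
    by (simp add: Z_def indicator_def)
  have Z_int: "integrable M (\<lambda>\<omega>. (Z \<omega>)\<^sup>2)"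
    unfolding Z_sq using X(2) AM by (intro integrable_real_mult_indicator)
  have Z_orth: "(\<integral>\<omega>. (Y \<omega> - X \<omega>) * Z \<omega> \<partial>M) = 0"
    using A X(1) Z_int by (intro orth) (auto simp: Z_def)
  have D_int: "integrable M (\<lambda>\<omega>. (Y \<omega> - X \<omega>)\<^sup>2)"
    using integrable_mult_square_integrable[OF Y(1) XM Y(2) X(2)] X(2) Y(2)
    by (auto simp: power2_diff mult.assoc intro!: Bochner_Integration.integrable_diff)
  have "integrable M (\<lambda>\<omega>. (Y \<omega> - X \<omega>) * Z \<omega>)"
    using XM Y(1) AM D_int Z_int by (intro integrable_mult_square_integrable) (auto simp: Z_def)
  moreover have "(Y \<omega>)\<^sup>2 * indicator A \<omega> =
      (X \<omega>)\<^sup>2 * indicator A \<omega> + (Y \<omega> - X \<omega>)\<^sup>2 * indicator A \<omega> + 2 * ((Y \<omega> - X \<omega>) * Z \<omega>)" for \<omega>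
    by (simp add: Z_def indicator_def power2_eq_square algebra_simps)
  ultimately have "(\<integral>\<omega>. (Y \<omega>)\<^sup>2 * indicator A \<omega> \<partial>M) =
      (\<integral>\<omega>. (X \<omega>)\<^sup>2 * indicator A \<omega> \<partial>M) + (\<integral>\<omega>. (Y \<omega> - X \<omega>)\<^sup>2 * indicator A \<omega> \<partial>M)"
    using X(2) D_int AM Z_orth by (simp add: integrable_real_mult_indicator)
  moreover have "0 \<le> (\<integral>\<omega>. (Y \<omega> - X \<omega>)\<^sup>2 * indicator A \<omega> \<partial>M)"
    by (intro integral_nonneg_AE) auto
  ultimately show ?thesis
    by simp
qed

lemma (in finite_measure) square_measure_le_integral_square_indicator:
  fixes X :: "'a \<Rightarrow> real"
  assumes "A \<in> sets M" "integrable M (\<lambda>\<omega>. (X \<omega>)\<^sup>2)" "0 \<le> c" "\<And>\<omega>. \<omega> \<in> A \<Longrightarrow> c \<le> \<bar>X \<omega>\<bar>"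
  shows "c\<^sup>2 * measure M A \<le> (\<integral>\<omega>. (X \<omega>)\<^sup>2 * indicator A \<omega> \<partial>M)"
proof -
  have "c\<^sup>2 * measure M A = (\<integral>\<omega>. c\<^sup>2 * indicator A \<omega> \<partial>M)"
    using assms(1) by simp
  also have "\<dots> \<le> (\<integral>\<omega>. (X \<omega>)\<^sup>2 * indicator A \<omega> \<partial>M)"
  proof (rule integral_mono)
    show "integrable M (\<lambda>\<omega>. c\<^sup>2 * indicator A \<omega>)" "integrable M (\<lambda>\<omega>. (X \<omega>)\<^sup>2 * indicator A \<omega>)"
      using assms(1,2) by (auto simp: less_top[symmetric] intro: integrable_real_mult_indicator)
    show "c\<^sup>2 * indicator A \<omega> \<le> (X \<omega>)\<^sup>2 * indicator A \<omega>" for \<omega>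
      using assms(3,4) by (auto simp: abs_le_square_iff[symmetric] split: split_indicator)
  qed
  finally show ?thesis .
qed

lemma first_index_decomposition:
  fixes P :: "nat \<Rightarrow> 'a \<Rightarrow> bool"
  shows "{x\<in>S. \<exists>i\<le>K. P i x} = (\<Union>k\<le>K. {x\<in>S. P k x \<and> (\<forall>j<k. \<not> P j x)})"
    and "disjoint_family_on (\<lambda>k. {x\<in>S. P k x \<and> (\<forall>j<k. \<not> P j x)}) I"
proof -
  show "{x\<in>S. \<exists>i\<le>K. P i x} = (\<Union>k\<le>K. {x\<in>S. P k x \<and> (\<forall>j<k. \<not> P j x)})"
  proof (intro equalityI subsetI)
    fix x assume "x \<in> {x\<in>S. \<exists>i\<le>K. P i x}"
    then obtain i where i: "x \<in> S" "i \<le> K" "P i x"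
      by blast
    define k where "k = (LEAST i. P i x)"
    have "P k x" "k \<le> i"
      unfolding k_def using i(3) by (rule LeastI, rule Least_le)
    moreover have "\<not> P j x" if "j < k" for j
      using not_less_Least[OF that[unfolded k_def]] .
    ultimately show "x \<in> (\<Union>k\<le>K. {x\<in>S. P k x \<and> (\<forall>j<k. \<not> P j x)})"
      using i by auto
  qed auto
  show "disjoint_family_on (\<lambda>k. {x\<in>S. P k x \<and> (\<forall>j<k. \<not> P j x)}) I"
    unfolding disjoint_family_on_def
  proof (intro ballI impI)
    fix m n :: nat assume "m \<noteq> n"
    then show "{x\<in>S. P m x \<and> (\<forall>j<m. \<not> P j x)} \<inter> {x\<in>S. P n x \<and> (\<forall>j<n. \<not> P j x)} = {}"
      by (cases "m < n") (auto simp: not_less_iff_gr_or_eq)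
  qed
qed

lemma (in prob_space) doob_maximal_inequality_square:
  fixes X :: "nat \<Rightarrow> 'a \<Rightarrow> real" and G :: "nat \<Rightarrow> 'a measure"
  assumes sub: "\<And>i. subalgebra M (G i)"
    and mono: "\<And>i j. i \<le> j \<Longrightarrow> sets (G i) \<subseteq> sets (G j)"
    and X: "\<And>i. i \<le> K \<Longrightarrow> X i \<in> borel_measurable (G i)"
      "\<And>i. i \<le> K \<Longrightarrow> integrable M (\<lambda>\<omega>. (X i \<omega>)\<^sup>2)"
    and orth: "\<And>i Z. i \<le> K \<Longrightarrow> Z \<in> borel_measurable (G i) \<Longrightarrow> integrable M (\<lambda>\<omega>. (Z \<omega>)\<^sup>2) \<Longrightarrow>
      (\<integral>\<omega>. (X K \<omega> - X i \<omega>) * Z \<omega> \<partial>M) = 0"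
    and "0 < c"
  shows "c\<^sup>2 * prob {\<omega>\<in>space M. \<exists>i\<le>K. c \<le> \<bar>X i \<omega>\<bar>} \<le> (\<integral>\<omega>. (X K \<omega>)\<^sup>2 \<partial>M)"
proof -
  define A where "A k = {\<omega>\<in>space M. c \<le> \<bar>X k \<omega>\<bar> \<and> (\<forall>j<k. \<not> c \<le> \<bar>X j \<omega>\<bar>)}" for k
  note first_index =
    first_index_decomposition[where S = "space M" and P = "\<lambda>i \<omega>. c \<le> \<bar>X i \<omega>\<bar>", folded A_def]
  have X_G: "X j \<in> borel_measurable (G k)" if "j \<le> k" "k \<le> K" for j k
    using measurable_from_subalg[OF _ X(1)] mono[OF that(1)] sub that by (auto simp: subalgebra_def)
  have A_G: "A k \<in> sets (G k)" if "k \<le> K" for k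
  proof -
    have "{\<omega>\<in>space (G k). c \<le> \<bar>X k \<omega>\<bar> \<and> (\<forall>j<k. \<not> c \<le> \<bar>X j \<omega>\<bar>)} \<in> sets (G k)"
      using X_G[OF order_refl that] X_G[OF less_imp_le _, OF _ that] by measurable
    then show ?thesis
      using sub[of k] by (simp add: A_def subalgebra_def)
  qed
  have A_M: "A k \<in> sets M" if "k \<le> K" for k
    using A_G[OF that] sub[of k] by (auto simp: subalgebra_def)
  have passage_bound: "c\<^sup>2 * prob (A k) \<le> (\<integral>\<omega>. (X K \<omega>)\<^sup>2 * indicator (A k) \<omega> \<partial>M)"
    if k: "k \<le> K" for k
  proof -
    have "c\<^sup>2 * prob (A k) \<le> (\<integral>\<omega>. (X k \<omega>)\<^sup>2 * indicator (A k) \<omega> \<partial>M)"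
      using A_M[OF k] X(2)[OF k] \<open>0 < c\<close> by (intro square_measure_le_integral_square_indicator) (auto simp: A_def)
    also have "\<dots> \<le> (\<integral>\<omega>. (X K \<omega>)\<^sup>2 * indicator (A k) \<omega> \<partial>M)"
      using k measurable_from_subalg[OF sub X(1)]
      by (intro integral_square_indicator_le_orthogonal[OF sub X(1) X(2) _ X(2) orth A_G]) auto
    finally show ?thesis .
  qed
  have "c\<^sup>2 * prob (\<Union>k\<le>K. A k) = (\<Sum>k\<le>K. c\<^sup>2 * prob (A k))"
    using A_M first_index(2) by (subst finite_measure_finite_Union) (auto simp: sum_distrib_left)
  also have "\<dots> \<le> (\<Sum>k\<le>K. \<integral>\<omega>. (X K \<omega>)\<^sup>2 * indicator (A k) \<omega> \<partial>M)"
    using passage_bound by (intro sum_mono) auto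
  also have "\<dots> = (\<integral>\<omega>. (\<Sum>k\<le>K. (X K \<omega>)\<^sup>2 * indicator (A k) \<omega>) \<partial>M)"
    using X(2)[of K] A_M by (subst Bochner_Integration.integral_sum) (auto intro: integrable_real_mult_indicator)
  also have "\<dots> = (\<integral>\<omega>. (X K \<omega>)\<^sup>2 * indicator (\<Union>k\<le>K. A k) \<omega> \<partial>M)"
    by (subst indicator_UN_disjoint[OF _ first_index(2)]) (auto simp: sum_distrib_left)
  also have "\<dots> \<le> (\<integral>\<omega>. (X K \<omega>)\<^sup>2 \<partial>M)"
    using X(2)[of K] A_M
    by (intro integral_mono integrable_real_mult_indicator) (auto simp: indicator_def)
  finally show ?thesis
    unfolding first_index(1) .
qed

section \<open>Increments of the Wiener process\<close>

locale wiener_filtration =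
  fixes M :: "'a measure" and F :: "real \<Rightarrow> 'a measure" and B :: "real \<Rightarrow> 'a \<Rightarrow> real"
  assumes filtered_prob_space: "filtered_prob_space M F"
    and wiener_process: "wiener_process M F B"
begin

sublocale prob_space M
  using filtered_prob_space by (simp add: filtered_prob_space_def)

lemma space_F: "space (F t) = space M"
  using filtered_prob_space filtration.space_F by (auto simp: filtered_prob_space_def)

lemma subalgebra_F: "subalgebra M (F t)"
  using filtered_prob_space space_F by (auto simp: filtered_prob_space_def subalgebra_def)

lemma measurable_F: "f \<in> borel_measurable (F t) \<Longrightarrow> f \<in> borel_measurable M"
  using measurable_from_subalg[OF subalgebra_F] by blast

lemma measurable_F_mono:
  assumes "s \<le> t" "f \<in> borel_measurable (F s)"
  shows "f \<in> borel_measurable (F t)"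
proof (rule measurable_from_subalg[OF _ assms(2)])
  show "subalgebra (F t) (F s)"
    using filtered_prob_space filtration.sets_F_mono[of "space M" F s t] assms(1) space_F
    by (auto simp: filtered_prob_space_def subalgebra_def)
qed

lemma B_measurable_F: "0 \<le> s \<Longrightarrow> s \<le> t \<Longrightarrow> B s \<in> borel_measurable (F t)"
  using wiener_process measurable_F_mono by (auto simp: wiener_process_def)

lemma B_measurable: "0 \<le> s \<Longrightarrow> B s \<in> borel_measurable M"
  using B_measurable_F measurable_F by blast

lemma prob_Int_increment:
  assumes "0 \<le> s" "s < t" "A \<in> sets (F s)" "U \<in> sets borel"
  shows "prob (A \<inter> {\<omega>\<in>space M. B t \<omega> - B s \<omega> \<in> U}) =
    prob A * measure (density lborel (normal_density 0 (sqrt (t - s)))) U"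
  using wiener_process assms by (simp add: wiener_process_def)

lemma distr_increment:
  assumes "0 \<le> s" "s < t"
  shows "distr M borel (\<lambda>\<omega>. B t \<omega> - B s \<omega>) = density lborel (normal_density 0 (sqrt (t - s)))"
    (is "distr M borel ?X = ?N")
proof (rule measure_eqI)
  interpret N: prob_space ?N
    using assms by (intro prob_space_normal_density) auto
  fix U assume "U \<in> sets (distr M borel ?X)"
  then have U: "U \<in> sets borel"
    by simp
  have "space M \<in> sets (F s)"
    using sets.top[of "F s"] space_F by simp
  from prob_Int_increment[OF assms this U]
  have "prob {\<omega>\<in>space M. ?X \<omega> \<in> U} = measure ?N U"
    by (simp add: Int_absorb1 prob_space)
  moreover have "?X -` U \<inter> space M = {\<omega>\<in>space M. ?X \<omega> \<in> U}"
    by auto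
  ultimately show "emeasure (distr M borel ?X) U = emeasure ?N U"
    using B_measurable assms U by (simp add: emeasure_distr emeasure_eq_measure N.emeasure_eq_measure)
qed simp

lemma integral_increment:
  assumes "0 \<le> s" "s < t" and g: "g \<in> borel_measurable borel"
  shows "integrable M (\<lambda>\<omega>. g (B t \<omega> - B s \<omega>)) \<longleftrightarrow>
      integrable lborel (\<lambda>x. normal_density 0 (sqrt (t - s)) x * g x)"
    and "(\<integral>\<omega>. g (B t \<omega> - B s \<omega>) \<partial>M) = (\<integral>x. normal_density 0 (sqrt (t - s)) x * g x \<partial>lborel)"
proof -
  have X: "(\<lambda>\<omega>. B t \<omega> - B s \<omega>) \<in> borel_measurable M"
    using B_measurable assms by auto
  have "integrable M (\<lambda>\<omega>. g (B t \<omega> - B s \<omega>)) \<longleftrightarrow> integrable (distr M borel (\<lambda>\<omega>. B t \<omega> - B s \<omega>)) g"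
    using integrable_distr_eq[OF X g] by simp
  also have "\<dots> \<longleftrightarrow> integrable lborel (\<lambda>x. normal_density 0 (sqrt (t - s)) x * g x)"
    unfolding distr_increment[OF assms(1,2)]
    by (subst integrable_density) (use g in \<open>auto simp: measurable_lborel1\<close>)
  finally show "integrable M (\<lambda>\<omega>. g (B t \<omega> - B s \<omega>)) \<longleftrightarrow>
      integrable lborel (\<lambda>x. normal_density 0 (sqrt (t - s)) x * g x)" .
  have "(\<integral>\<omega>. g (B t \<omega> - B s \<omega>) \<partial>M) = integral\<^sup>L (distr M borel (\<lambda>\<omega>. B t \<omega> - B s \<omega>)) g"
    using integral_distr[OF X g] by simp
  also have "\<dots> = (\<integral>x. normal_density 0 (sqrt (t - s)) x * g x \<partial>lborel)"
    unfolding distr_increment[OF assms(1,2)]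
    by (subst integral_density) (use g in \<open>auto simp: measurable_lborel1\<close>)
  finally show "(\<integral>\<omega>. g (B t \<omega> - B s \<omega>) \<partial>M) = (\<integral>x. normal_density 0 (sqrt (t - s)) x * g x \<partial>lborel)" .
qed

lemma increment_mean:
  assumes "0 \<le> s" "s \<le> t"
  shows "integrable M (\<lambda>\<omega>. B t \<omega> - B s \<omega>)" and "(\<integral>\<omega>. B t \<omega> - B s \<omega> \<partial>M) = 0"
proof -
  have "integrable M (\<lambda>\<omega>. B t \<omega> - B s \<omega>) \<and> (\<integral>\<omega>. B t \<omega> - B s \<omega> \<partial>M) = 0"
  proof (cases "s = t")
    case False
    then have "s < t" "0 < sqrt (t - s)"
      using assms by auto
    then show ?thesis
      using integral_increment[OF assms(1) \<open>s < t\<close>, of "\<lambda>x. x"]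
        integrable_normal_moment_nz_1[of "sqrt (t - s)" 0] integral_normal_moment_nz_1[of "sqrt (t - s)" 0]
      by simp
  qed simp
  then show "integrable M (\<lambda>\<omega>. B t \<omega> - B s \<omega>)" "(\<integral>\<omega>. B t \<omega> - B s \<omega> \<partial>M) = 0"
    by auto
qed

lemma increment_variance:
  assumes "0 \<le> s" "s \<le> t"
  shows "integrable M (\<lambda>\<omega>. (B t \<omega> - B s \<omega>)\<^sup>2)" and "(\<integral>\<omega>. (B t \<omega> - B s \<omega>)\<^sup>2 \<partial>M) = t - s"
proof -
  have "integrable M (\<lambda>\<omega>. (B t \<omega> - B s \<omega>)\<^sup>2) \<and> (\<integral>\<omega>. (B t \<omega> - B s \<omega>)\<^sup>2 \<partial>M) = t - s"
  proof (cases "s = t")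
    case False
    then have "s < t" "0 < sqrt (t - s)"
      using assms by auto
    then show ?thesis
      using integral_increment[OF assms(1) \<open>s < t\<close>, of "\<lambda>x. x\<^sup>2"]
        integrable_normal_moment[of "sqrt (t - s)" 0 2] integral_normal_moment_even[of "sqrt (t - s)" 0 1]
      by (simp add: numeral_eq_Suc)
  qed simp
  then show "integrable M (\<lambda>\<omega>. (B t \<omega> - B s \<omega>)\<^sup>2)" "(\<integral>\<omega>. (B t \<omega> - B s \<omega>)\<^sup>2 \<partial>M) = t - s"
    by auto
qed

lemma indep_var_increment:
  assumes "0 \<le> s" "s < t" and Y: "Y \<in> borel_measurable (F s)"
  shows "indep_var borel Y borel (\<lambda>\<omega>. B t \<omega> - B s \<omega>)"
proof -
  let ?X = "\<lambda>\<omega>. B t \<omega> - B s \<omega>"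
  have XM: "?X \<in> borel_measurable M" and YM: "Y \<in> borel_measurable M"
    using B_measurable assms measurable_F by auto
  let ?GY = "{Y -` A \<inter> space M | A. A \<in> sets borel}"
  let ?GX = "{?X -` A \<inter> space M | A. A \<in> sets borel}"
  have indep: "indep_set ?GY ?GX"
    unfolding indep_sets2_eq
  proof (intro conjI ballI)
    show "?GY \<subseteq> events" "?GX \<subseteq> events"
      using XM YM by (auto intro: measurable_sets)
    fix a b assume "a \<in> ?GY" "b \<in> ?GX"
    then obtain A U where A: "A \<in> sets borel" "a = Y -` A \<inter> space M"
      and U: "U \<in> sets borel" "b = {\<omega>\<in>space M. ?X \<omega> \<in> U}"
      by auto
    have a_F: "a \<in> sets (F s)" and space_in_F: "space M \<in> sets (F s)"
      using measurable_sets[OF Y A(1)] A(2) sets.top[of "F s"] space_F by simp_all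
    have "prob (a \<inter> b) = prob a * measure (density lborel (normal_density 0 (sqrt (t - s)))) U"
      using prob_Int_increment[OF assms(1,2) a_F U(1)] U(2) by simp
    moreover have "prob b = measure (density lborel (normal_density 0 (sqrt (t - s)))) U"
      using prob_Int_increment[OF assms(1,2) space_in_F U(1)] U(2) by (simp add: Int_absorb1 prob_space)
    ultimately show "prob (a \<inter> b) = prob a * prob b"
      by simp
  qed
  have stable: "Int_stable {f -` A \<inter> space M | A. A \<in> sets borel}" for f :: "'a \<Rightarrow> real"
  proof (rule Int_stableI)
    fix a b assume "a \<in> {f -` A \<inter> space M | A. A \<in> sets borel}" "b \<in> {f -` A \<inter> space M | A. A \<in> sets borel}"
    then obtain A A' where "A \<in> sets borel" "A' \<in> sets borel" "a = f -` A \<inter> space M" "b = f -` A' \<inter> space M"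
      by auto
    then show "a \<inter> b \<in> {f -` A \<inter> space M | A. A \<in> sets borel}"
      by (intro CollectI exI[of _ "A \<inter> A'"]) auto
  qed
  from indep_set_sigma_sets[OF indep stable stable] show ?thesis
    unfolding indep_var_eq using XM YM by simp
qed

lemma integral_mult_increment:
  assumes "0 \<le> c" "c \<le> d" and Y: "Y \<in> borel_measurable (F c)" "integrable M Y"
  shows "integrable M (\<lambda>\<omega>. Y \<omega> * (B d \<omega> - B c \<omega>))"
    and "(\<integral>\<omega>. Y \<omega> * (B d \<omega> - B c \<omega>) \<partial>M) = 0"
proof -
  have "integrable M (\<lambda>\<omega>. Y \<omega> * (B d \<omega> - B c \<omega>)) \<and> (\<integral>\<omega>. Y \<omega> * (B d \<omega> - B c \<omega>) \<partial>M) = 0"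
  proof (cases "c = d")
    case False
    then have indep: "indep_var borel Y borel (\<lambda>\<omega>. B d \<omega> - B c \<omega>)"
      using assms by (intro indep_var_increment) auto
    show ?thesis
      using indep_var_integrable[OF indep Y(2) increment_mean(1)[OF assms(1,2)]]
        indep_var_lebesgue_integral[OF indep Y(2) increment_mean(1)[OF assms(1,2)]]
        increment_mean(2)[OF assms(1,2)]
      by simp
  qed simp
  then show "integrable M (\<lambda>\<omega>. Y \<omega> * (B d \<omega> - B c \<omega>))" "(\<integral>\<omega>. Y \<omega> * (B d \<omega> - B c \<omega>) \<partial>M) = 0"
    by auto
qed

lemma integral_mult_increment_square:
  assumes "0 \<le> c" "c \<le> d" and Y: "Y \<in> borel_measurable (F c)" "integrable M Y"
  shows "integrable M (\<lambda>\<omega>. Y \<omega> * (B d \<omega> - B c \<omega>)\<^sup>2)"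
    and "(\<integral>\<omega>. Y \<omega> * (B d \<omega> - B c \<omega>)\<^sup>2 \<partial>M) = (\<integral>\<omega>. Y \<omega> \<partial>M) * (d - c)"
proof -
  have "integrable M (\<lambda>\<omega>. Y \<omega> * (B d \<omega> - B c \<omega>)\<^sup>2) \<and>
      (\<integral>\<omega>. Y \<omega> * (B d \<omega> - B c \<omega>)\<^sup>2 \<partial>M) = (\<integral>\<omega>. Y \<omega> \<partial>M) * (d - c)"
  proof (cases "c = d")
    case False
    then have "indep_var borel Y borel (\<lambda>\<omega>. B d \<omega> - B c \<omega>)"
      using assms by (intro indep_var_increment) auto
    then have "indep_var borel (id \<circ> Y) borel ((\<lambda>x. x\<^sup>2) \<circ> (\<lambda>\<omega>. B d \<omega> - B c \<omega>))"
      by (rule indep_var_compose) auto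
    then have indep: "indep_var borel Y borel (\<lambda>\<omega>. (B d \<omega> - B c \<omega>)\<^sup>2)"
      by (simp add: o_def)
    show ?thesis
      using indep_var_integrable[OF indep Y(2) increment_variance(1)[OF assms(1,2)]]
        indep_var_lebesgue_integral[OF indep Y(2) increment_variance(1)[OF assms(1,2)]]
        increment_variance(2)[OF assms(1,2)]
      by simp
  qed simp
  then show "integrable M (\<lambda>\<omega>. Y \<omega> * (B d \<omega> - B c \<omega>)\<^sup>2)"
    "(\<integral>\<omega>. Y \<omega> * (B d \<omega> - B c \<omega>)\<^sup>2 \<partial>M) = (\<integral>\<omega>. Y \<omega> \<partial>M) * (d - c)"
    by auto
qed

lemma square_integrable_mult_increment:
  assumes "0 \<le> a" "a \<le> b" "\<xi> \<in> borel_measurable (F a)" "integrable M (\<lambda>\<omega>. (\<xi> \<omega>)\<^sup>2)"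
  shows "integrable M (\<lambda>\<omega>. (\<xi> \<omega> * (B b \<omega> - B a \<omega>))\<^sup>2)"
  using integral_mult_increment_square(1)[OF assms(1,2) _ assms(4)] assms(3)
  by (simp add: power_mult_distrib)

lemma integral_mult_increments_common_start:
  assumes "0 \<le> c" "c \<le> b" "c \<le> d" and Z: "Z \<in> borel_measurable (F c)" "integrable M Z"
  shows "integrable M (\<lambda>\<omega>. Z \<omega> * (B b \<omega> - B c \<omega>) * (B d \<omega> - B c \<omega>)) \<and>
    (\<integral>\<omega>. Z \<omega> * (B b \<omega> - B c \<omega>) * (B d \<omega> - B c \<omega>) \<partial>M) = (\<integral>\<omega>. Z \<omega> \<partial>M) * (min b d - c)"
proof -
  have nested: "integrable M (\<lambda>\<omega>. Z \<omega> * (B b' \<omega> - B c \<omega>) * (B d' \<omega> - B c \<omega>)) \<and>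
      (\<integral>\<omega>. Z \<omega> * (B b' \<omega> - B c \<omega>) * (B d' \<omega> - B c \<omega>) \<partial>M) = (\<integral>\<omega>. Z \<omega> \<partial>M) * (b' - c)"
    if b': "c \<le> b'" "b' \<le> d'" for b' d'
  proof -
    have split: "Z \<omega> * (B b' \<omega> - B c \<omega>) * (B d' \<omega> - B c \<omega>) =
        Z \<omega> * (B b' \<omega> - B c \<omega>)\<^sup>2 + (Z \<omega> * (B b' \<omega> - B c \<omega>)) * (B d' \<omega> - B b' \<omega>)" for \<omega>
      by (simp add: power2_eq_square algebra_simps)
    have "(\<lambda>\<omega>. Z \<omega> * (B b' \<omega> - B c \<omega>)) \<in> borel_measurable (F b')"
      using measurable_F_mono[OF b'(1) Z(1)] B_measurable_F[OF assms(1) b'(1)]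
        B_measurable_F[OF order_trans[OF assms(1) b'(1)] order_refl]
      by measurable
    note later = integral_mult_increment[OF _ b'(2) this integral_mult_increment(1)[OF assms(1) b'(1) Z]]
    show ?thesis
      unfolding split using integral_mult_increment_square[OF assms(1) b'(1) Z] later assms b' by auto
  qed
  show ?thesis
  proof (cases "b \<le> d")
    case True
    then show ?thesis
      using nested[of b d] assms by simp
  next
    case False
    then show ?thesis
      using nested[of d b] assms by (simp add: mult_ac)
  qed
qed

lemma integral_mult_increments_ordered:
  assumes "0 \<le> a" "a \<le> b" "a \<le> c" "c \<le> d"
    and \<xi>: "\<xi> \<in> borel_measurable (F a)" "integrable M (\<lambda>\<omega>. (\<xi> \<omega>)\<^sup>2)"
    and \<eta>: "\<eta> \<in> borel_measurable (F c)" "integrable M (\<lambda>\<omega>. (\<eta> \<omega>)\<^sup>2)"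
  shows "integrable M (\<lambda>\<omega>. (\<xi> \<omega> * (B b \<omega> - B a \<omega>)) * (\<eta> \<omega> * (B d \<omega> - B c \<omega>))) \<and>
    (\<integral>\<omega>. (\<xi> \<omega> * (B b \<omega> - B a \<omega>)) * (\<eta> \<omega> * (B d \<omega> - B c \<omega>)) \<partial>M) =
      (\<integral>\<omega>. \<xi> \<omega> * \<eta> \<omega> \<partial>M) * measure lborel ({a..<b} \<inter> {c..<d})"
proof -
  have \<xi>M: "\<xi> \<in> borel_measurable M" and \<eta>M: "\<eta> \<in> borel_measurable M"
    using measurable_F \<xi> \<eta> by blast+
  have \<xi>_F_c: "\<xi> \<in> borel_measurable (F c)"
    using measurable_F_mono[OF assms(3) \<xi>(1)] .
  define m where "m = min b c"
  have m: "a \<le> m" "m \<le> c"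
    using assms by (auto simp: m_def)
  text \<open>Up to time m the first increment is F c-measurable and the second one is centred;
    the remaining part of the first increment starts at c, like the second one.\<close>
  have split: "(\<xi> \<omega> * (B b \<omega> - B a \<omega>)) * (\<eta> \<omega> * (B d \<omega> - B c \<omega>)) =
      (\<xi> \<omega> * (B m \<omega> - B a \<omega>) * \<eta> \<omega>) * (B d \<omega> - B c \<omega>) +
      (\<xi> \<omega> * \<eta> \<omega>) * (B (max b c) \<omega> - B c \<omega>) * (B d \<omega> - B c \<omega>)" for \<omega>
    by (cases "b \<le> c") (auto simp: m_def algebra_simps)
  have "(\<lambda>\<omega>. \<xi> \<omega> * (B m \<omega> - B a \<omega>) * \<eta> \<omega>) \<in> borel_measurable (F c)"
    using \<xi>_F_c \<eta>(1) B_measurable_F[OF order_trans[OF assms(1) m(1)] m(2)] B_measurable_F[OF assms(1,3)]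
    by measurable
  moreover have "integrable M (\<lambda>\<omega>. \<xi> \<omega> * (B m \<omega> - B a \<omega>) * \<eta> \<omega>)"
    using \<xi>M \<eta>M B_measurable m assms \<eta>(2) square_integrable_mult_increment[OF assms(1) m(1) \<xi>]
    by (intro integrable_mult_square_integrable) auto
  ultimately have first: "integrable M (\<lambda>\<omega>. \<xi> \<omega> * (B m \<omega> - B a \<omega>) * \<eta> \<omega> * (B d \<omega> - B c \<omega>)) \<and>
      (\<integral>\<omega>. \<xi> \<omega> * (B m \<omega> - B a \<omega>) * \<eta> \<omega> * (B d \<omega> - B c \<omega>) \<partial>M) = 0"
    using integral_mult_increment[OF order_trans[OF assms(1,3)] assms(4)] by blast
  have "(\<lambda>\<omega>. \<xi> \<omega> * \<eta> \<omega>) \<in> borel_measurable (F c)"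
    using \<xi>_F_c \<eta>(1) by measurable
  then have second: "integrable M (\<lambda>\<omega>. \<xi> \<omega> * \<eta> \<omega> * (B (max b c) \<omega> - B c \<omega>) * (B d \<omega> - B c \<omega>)) \<and>
      (\<integral>\<omega>. \<xi> \<omega> * \<eta> \<omega> * (B (max b c) \<omega> - B c \<omega>) * (B d \<omega> - B c \<omega>) \<partial>M) =
        (\<integral>\<omega>. \<xi> \<omega> * \<eta> \<omega> \<partial>M) * (min (max b c) d - c)"
    using integrable_mult_square_integrable[OF \<xi>M \<eta>M \<xi>(2) \<eta>(2)] assms
    by (intro integral_mult_increments_common_start) auto
  have "measure lborel ({a..<b} \<inter> {c..<d}) = min (max b c) d - c"
    using assms by (auto simp: max_def min_def)
  then show ?thesis
    unfolding split using first second by simp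
qed

lemma integral_mult_increments:
  assumes "0 \<le> a" "a \<le> b" "0 \<le> c" "c \<le> d"
    and \<xi>: "\<xi> \<in> borel_measurable (F a)" "integrable M (\<lambda>\<omega>. (\<xi> \<omega>)\<^sup>2)"
    and \<eta>: "\<eta> \<in> borel_measurable (F c)" "integrable M (\<lambda>\<omega>. (\<eta> \<omega>)\<^sup>2)"
  shows "integrable M (\<lambda>\<omega>. (\<xi> \<omega> * (B b \<omega> - B a \<omega>)) * (\<eta> \<omega> * (B d \<omega> - B c \<omega>))) \<and>
    (\<integral>\<omega>. (\<xi> \<omega> * (B b \<omega> - B a \<omega>)) * (\<eta> \<omega> * (B d \<omega> - B c \<omega>)) \<partial>M) =
      (\<integral>\<omega>. \<xi> \<omega> * \<eta> \<omega> \<partial>M) * measure lborel ({a..<b} \<inter> {c..<d})"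
proof (cases "a \<le> c")
  case True
  then show ?thesis
    using integral_mult_increments_ordered[OF assms(1,2) True assms(4) \<xi> \<eta>] by simp
next
  case False
  then show ?thesis
    using integral_mult_increments_ordered[OF assms(3,4) _ assms(2) \<eta> \<xi>]
    by (simp add: mult.commute Int_commute)
qed

end

section \<open>Adapted step processes and the Ito isometry\<close>

text \<open>The intervals [a k, e k) of a step process may overlap, so that truncations and
  differences of step processes are again step processes.\<close>

definition step_process :: "'i set \<Rightarrow> ('i \<Rightarrow> real) \<Rightarrow> ('i \<Rightarrow> real) \<Rightarrow> ('i \<Rightarrow> 'a \<Rightarrow> real)
    \<Rightarrow> real \<Rightarrow> 'a \<Rightarrow> real" where
  "step_process K a e z s \<omega> = (\<Sum>k\<in>K. z k \<omega> * indicator {a k..<e k} s)"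

definition step_integral :: "(real \<Rightarrow> 'a \<Rightarrow> real) \<Rightarrow> 'i set \<Rightarrow> ('i \<Rightarrow> real) \<Rightarrow> ('i \<Rightarrow> real)
    \<Rightarrow> ('i \<Rightarrow> 'a \<Rightarrow> real) \<Rightarrow> 'a \<Rightarrow> real" where
  "step_integral B K a e z \<omega> = (\<Sum>k\<in>K. z k \<omega> * (B (e k) \<omega> - B (a k) \<omega>))"

definition truncate_ends :: "real \<Rightarrow> ('i \<Rightarrow> real) \<Rightarrow> ('i \<Rightarrow> real) \<Rightarrow> 'i \<Rightarrow> real" where
  "truncate_ends u a e k = max (a k) (min (e k) u)"

lemma step_process_truncate_ends:
  "step_process K a (truncate_ends u a e) z s \<omega> = (if s < u then step_process K a e z s \<omega> else 0)"
  unfolding step_process_def truncate_ends_def by (auto simp: indicator_def intro!: sum.cong sum.neutral)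

lemma step_process_Plus:
  assumes "finite K\<^sub>1" "finite K\<^sub>2"
  shows "step_process (K\<^sub>1 <+> K\<^sub>2) (case_sum a\<^sub>1 a\<^sub>2) (case_sum e\<^sub>1 e\<^sub>2) (case_sum z\<^sub>1 (\<lambda>k \<omega>. - z\<^sub>2 k \<omega>)) s \<omega> =
    step_process K\<^sub>1 a\<^sub>1 e\<^sub>1 z\<^sub>1 s \<omega> - step_process K\<^sub>2 a\<^sub>2 e\<^sub>2 z\<^sub>2 s \<omega>"
  unfolding step_process_def sum.Plus[OF assms] by (simp add: o_def sum_negf)

lemma step_integral_Plus:
  assumes "finite K\<^sub>1" "finite K\<^sub>2"
  shows "step_integral B (K\<^sub>1 <+> K\<^sub>2) (case_sum a\<^sub>1 a\<^sub>2) (case_sum e\<^sub>1 e\<^sub>2) (case_sum z\<^sub>1 (\<lambda>k \<omega>. - z\<^sub>2 k \<omega>)) \<omega> =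
    step_integral B K\<^sub>1 a\<^sub>1 e\<^sub>1 z\<^sub>1 \<omega> - step_integral B K\<^sub>2 a\<^sub>2 e\<^sub>2 z\<^sub>2 \<omega>"
  unfolding step_integral_def sum.Plus[OF assms] by (simp add: o_def sum_negf)

lemma step_process_eq_0:
  "(\<And>k. k \<in> K \<Longrightarrow> s \<notin> {a k..<e k}) \<Longrightarrow> step_process K a e z s \<omega> = 0"
  unfolding step_process_def by (intro sum.neutral) simp

lemma step_process_square:
  "(step_process K a e z s \<omega>)\<^sup>2 =
    (\<Sum>k\<in>K. \<Sum>j\<in>K. z k \<omega> * z j \<omega> * indicator ({a k..<e k} \<inter> {a j..<e j}) s)"
  unfolding step_process_def power2_eq_square sum_product indicator_inter_arith
  by (simp add: mult_ac)

lemma nn_integral_step_process_square: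
  assumes "finite K"
  shows "(\<integral>\<^sup>+s. ennreal ((step_process K a e z s \<omega>)\<^sup>2) \<partial>lborel) =
    ennreal (\<Sum>k\<in>K. \<Sum>j\<in>K. z k \<omega> * z j \<omega> * measure lborel ({a k..<e k} \<inter> {a j..<e j}))"
    and "0 \<le> (\<Sum>k\<in>K. \<Sum>j\<in>K. z k \<omega> * z j \<omega> * measure lborel ({a k..<e k} \<inter> {a j..<e j}))"
proof -
  have fin: "emeasure lborel ({a k..<e k} \<inter> {a j..<e j}) < \<infinity>" for k j
    by (intro emeasure_bounded_finite) auto
  have int: "integrable lborel (\<lambda>s. z k \<omega> * z j \<omega> * indicator ({a k..<e k} \<inter> {a j..<e j}) s :: real)"
    for k j
    using fin[of k j] by (intro integrable_mult_right integrable_real_indicator) auto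
  have "(\<integral>s. (step_process K a e z s \<omega>)\<^sup>2 \<partial>lborel) =
      (\<Sum>k\<in>K. \<Sum>j\<in>K. z k \<omega> * z j \<omega> * measure lborel ({a k..<e k} \<inter> {a j..<e j}))"
    unfolding step_process_square using int by (simp add: Bochner_Integration.integral_sum)
  moreover have "integrable lborel (\<lambda>s. (step_process K a e z s \<omega>)\<^sup>2)"
    unfolding step_process_square using int by (intro Bochner_Integration.integrable_sum)
  ultimately show "(\<integral>\<^sup>+s. ennreal ((step_process K a e z s \<omega>)\<^sup>2) \<partial>lborel) =
      ennreal (\<Sum>k\<in>K. \<Sum>j\<in>K. z k \<omega> * z j \<omega> * measure lborel ({a k..<e k} \<inter> {a j..<e j}))"
    and "0 \<le> (\<Sum>k\<in>K. \<Sum>j\<in>K. z k \<omega> * z j \<omega> * measure lborel ({a k..<e k} \<inter> {a j..<e j}))"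
    using nn_integral_eq_integral[of lborel "\<lambda>s. (step_process K a e z s \<omega>)\<^sup>2"]
      integral_nonneg_AE[of "\<lambda>s. (step_process K a e z s \<omega>)\<^sup>2" lborel]
    by auto
qed

lemma simple_val_eq_step_process: "simple_val n tk \<xi> = step_process {..<n} tk (tk \<circ> Suc) \<xi>"
  unfolding simple_val_def step_process_def by (intro ext sum.cong refl) (simp add: indicator_def)

lemma simple_int_eq_step_integral: "simple_int B n tk \<xi> = step_integral B {..<n} tk (tk \<circ> Suc) \<xi>"
  by (intro ext) (simp add: simple_int_def step_integral_def)

lemma simple_process_partition_bounds:
  assumes "simple_process M F T n tk \<xi>" "k \<le> n"
  shows "0 \<le> tk k" "tk k \<le> T"
proof -
  have increasing: "tk j \<le> tk (Suc j)" if "j < n" for j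
    using assms(1) that by (auto simp: simple_process_def less_imp_le)
  have "tk 0 \<le> tk k"
    using assms(2)
  proof (induction k)
    case (Suc k)
    then show ?case
      using increasing[of k] by simp
  qed simp
  moreover have "tk k \<le> tk n"
    using assms(2)
  proof (induction k rule: inc_induct)
    case (step j)
    then show ?case
      using increasing[of j] by simp
  qed simp
  ultimately show "0 \<le> tk k" "tk k \<le> T"
    using assms(1) by (auto simp: simple_process_def)
qed

context wiener_filtration
begin

definition adapted_steps :: "'i set \<Rightarrow> ('i \<Rightarrow> real) \<Rightarrow> ('i \<Rightarrow> real) \<Rightarrow> ('i \<Rightarrow> 'a \<Rightarrow> real) \<Rightarrow> bool" where
  "adapted_steps K a e z \<longleftrightarrow> finite K \<and> (\<forall>k\<in>K. 0 \<le> a k \<and> a k \<le> e k \<and>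
     z k \<in> borel_measurable (F (a k)) \<and> integrable M (\<lambda>\<omega>. (z k \<omega>)\<^sup>2))"

lemma adapted_steps_truncate_ends:
  "adapted_steps K a e z \<Longrightarrow> adapted_steps K a (truncate_ends u a e) z"
  by (auto simp: adapted_steps_def truncate_ends_def)

lemma adapted_steps_Plus:
  assumes "adapted_steps K\<^sub>1 a\<^sub>1 e\<^sub>1 z\<^sub>1" "adapted_steps K\<^sub>2 a\<^sub>2 e\<^sub>2 z\<^sub>2"
  shows "adapted_steps (K\<^sub>1 <+> K\<^sub>2) (case_sum a\<^sub>1 a\<^sub>2) (case_sum e\<^sub>1 e\<^sub>2) (case_sum z\<^sub>1 (\<lambda>k \<omega>. - z\<^sub>2 k \<omega>))"
  using assms by (auto simp: adapted_steps_def)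

lemma adapted_steps_measurable:
  assumes "adapted_steps K a e z" "k \<in> K"
  shows "z k \<in> borel_measurable M"
proof -
  have "z k \<in> borel_measurable (F (a k))"
    using assms by (simp add: adapted_steps_def)
  then show ?thesis
    by (rule measurable_F)
qed

lemma step_integral_measurable:
  assumes "adapted_steps K a e z"
  shows "step_integral B K a e z \<in> borel_measurable M"
  unfolding step_integral_def
proof (rule borel_measurable_sum)
  fix k assume "k \<in> K"
  then have "0 \<le> a k" "a k \<le> e k" "z k \<in> borel_measurable M"
    using assms adapted_steps_measurable[OF assms] by (auto simp: adapted_steps_def)
  then show "(\<lambda>\<omega>. z k \<omega> * (B (e k) \<omega> - B (a k) \<omega>)) \<in> borel_measurable M"
    using B_measurable[of "a k"] B_measurable[of "e k"] by simp
qed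

lemma step_integral_truncate_ends_measurable_F:
  assumes "adapted_steps K a e z" "0 \<le> u"
  shows "step_integral B K a (truncate_ends u a e) z \<in> borel_measurable (F u)"
  unfolding step_integral_def
proof (rule borel_measurable_sum)
  fix k assume "k \<in> K"
  then have k: "0 \<le> a k" "a k \<le> e k" "z k \<in> borel_measurable (F (a k))"
    using assms by (auto simp: adapted_steps_def)
  show "(\<lambda>\<omega>. z k \<omega> * (B (truncate_ends u a e k) \<omega> - B (a k) \<omega>)) \<in> borel_measurable (F u)"
  proof (cases "a k \<le> u")
    case True
    then have "0 \<le> truncate_ends u a e k" "truncate_ends u a e k \<le> u"
      using k by (auto simp: truncate_ends_def)
    then show ?thesis
      using measurable_F_mono[OF True k(3)] B_measurable_F[OF _ True] B_measurable_F k(1) by measurable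
  next
    case False
    then show ?thesis
      by (simp add: truncate_ends_def)
  qed
qed

lemma step_process_measurable:
  assumes "adapted_steps K a e z"
  shows "(\<lambda>(\<omega>, s). step_process K a e z s \<omega>) \<in> borel_measurable (M \<Otimes>\<^sub>M lborel)"
proof -
  have "(\<lambda>p. \<Sum>k\<in>K. z k (fst p) * indicator {a k..<e k} (snd p)) \<in> borel_measurable (M \<Otimes>\<^sub>M lborel)"
  proof (intro borel_measurable_sum)
    fix k assume "k \<in> K"
    then have [measurable]: "z k \<in> borel_measurable M"
      using adapted_steps_measurable[OF assms] by blast
    show "(\<lambda>p. z k (fst p) * indicator {a k..<e k} (snd p)) \<in> borel_measurable (M \<Otimes>\<^sub>M lborel)"
      by measurable
  qed
  then show ?thesis
    by (simp add: step_process_def split_beta')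
qed

lemma ito_isometry_step_process:
  assumes "adapted_steps K a e z"
  shows "integrable M (\<lambda>\<omega>. (step_integral B K a e z \<omega>)\<^sup>2)"
    and "(\<integral>\<^sup>+\<omega>. ennreal ((step_integral B K a e z \<omega>)\<^sup>2) \<partial>M) =
      (\<integral>\<^sup>+\<omega>. \<integral>\<^sup>+s. ennreal ((step_process K a e z s \<omega>)\<^sup>2) \<partial>lborel \<partial>M)"
proof -
  have fin: "finite K" and steps: "\<And>k. k \<in> K \<Longrightarrow> 0 \<le> a k \<and> a k \<le> e k \<and>
      z k \<in> borel_measurable (F (a k)) \<and> integrable M (\<lambda>\<omega>. (z k \<omega>)\<^sup>2)"
    using assms by (auto simp: adapted_steps_def)
  define m where "m k j = measure lborel ({a k..<e k} \<inter> {a j..<e j})" for k j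
  define \<Delta> where "\<Delta> k \<omega> = z k \<omega> * (B (e k) \<omega> - B (a k) \<omega>)" for k \<omega>
  have cov: "integrable M (\<lambda>\<omega>. \<Delta> k \<omega> * \<Delta> j \<omega>) \<and>
      (\<integral>\<omega>. \<Delta> k \<omega> * \<Delta> j \<omega> \<partial>M) = (\<integral>\<omega>. z k \<omega> * z j \<omega> \<partial>M) * m k j" if "k \<in> K" "j \<in> K" for k j
    unfolding \<Delta>_def m_def using steps[OF that(1)] steps[OF that(2)] by (intro integral_mult_increments) auto
  have zz: "integrable M (\<lambda>\<omega>. z k \<omega> * z j \<omega> * m k j)" if "k \<in> K" "j \<in> K" for k j
    using steps[OF that(1)] steps[OF that(2)] adapted_steps_measurable[OF assms] that
    by (intro integrable_mult_left integrable_mult_square_integrable) auto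
  have sq: "(step_integral B K a e z \<omega>)\<^sup>2 = (\<Sum>k\<in>K. \<Sum>j\<in>K. \<Delta> k \<omega> * \<Delta> j \<omega>)" for \<omega>
    unfolding step_integral_def power2_eq_square sum_product \<Delta>_def ..
  show int: "integrable M (\<lambda>\<omega>. (step_integral B K a e z \<omega>)\<^sup>2)"
    unfolding sq using cov by (intro Bochner_Integration.integrable_sum) auto
  have "(\<integral>\<^sup>+\<omega>. ennreal ((step_integral B K a e z \<omega>)\<^sup>2) \<partial>M) =
      ennreal (\<integral>\<omega>. (step_integral B K a e z \<omega>)\<^sup>2 \<partial>M)"
    using int by (intro nn_integral_eq_integral) auto
  also have "(\<integral>\<omega>. (step_integral B K a e z \<omega>)\<^sup>2 \<partial>M) = (\<Sum>k\<in>K. \<Sum>j\<in>K. (\<integral>\<omega>. z k \<omega> * z j \<omega> \<partial>M) * m k j)"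
    unfolding sq using cov by (simp add: Bochner_Integration.integral_sum)
  also have "\<dots> = (\<integral>\<omega>. (\<Sum>k\<in>K. \<Sum>j\<in>K. z k \<omega> * z j \<omega> * m k j) \<partial>M)"
    using zz by (simp add: Bochner_Integration.integral_sum)
  also have "ennreal \<dots> = (\<integral>\<^sup>+\<omega>. ennreal (\<Sum>k\<in>K. \<Sum>j\<in>K. z k \<omega> * z j \<omega> * m k j) \<partial>M)"
  proof (rule nn_integral_eq_integral[symmetric])
    show "integrable M (\<lambda>\<omega>. \<Sum>k\<in>K. \<Sum>j\<in>K. z k \<omega> * z j \<omega> * m k j)"
      using zz by auto
    show "AE \<omega> in M. 0 \<le> (\<Sum>k\<in>K. \<Sum>j\<in>K. z k \<omega> * z j \<omega> * m k j)"
      unfolding m_def by (intro AE_I2) (rule nn_integral_step_process_square(2)[OF fin])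
  qed
  also have "\<dots> = (\<integral>\<^sup>+\<omega>. \<integral>\<^sup>+s. ennreal ((step_process K a e z s \<omega>)\<^sup>2) \<partial>lborel \<partial>M)"
    by (simp add: nn_integral_step_process_square(1)[OF fin] m_def)
  finally show "(\<integral>\<^sup>+\<omega>. ennreal ((step_integral B K a e z \<omega>)\<^sup>2) \<partial>M) =
      (\<integral>\<^sup>+\<omega>. \<integral>\<^sup>+s. ennreal ((step_process K a e z s \<omega>)\<^sup>2) \<partial>lborel \<partial>M)" .
qed

lemma integral_mult_truncate_ends_increment:
  assumes "adapted_steps K a e z" "k \<in> K" "0 \<le> u" "u \<le> v"
    and Z: "Z \<in> borel_measurable (F u)" "integrable M (\<lambda>\<omega>. (Z \<omega>)\<^sup>2)"
  shows "integrable M (\<lambda>\<omega>. z k \<omega> * Z \<omega> * (B (truncate_ends v a e k) \<omega> - B (truncate_ends u a e k) \<omega>)) \<and>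
    (\<integral>\<omega>. z k \<omega> * Z \<omega> * (B (truncate_ends v a e k) \<omega> - B (truncate_ends u a e k) \<omega>) \<partial>M) = 0"
proof -
  have k: "0 \<le> a k" "a k \<le> e k" "z k \<in> borel_measurable (F (a k))" "integrable M (\<lambda>\<omega>. (z k \<omega>)\<^sup>2)"
    using assms(1,2) by (auto simp: adapted_steps_def)
  have int: "integrable M (\<lambda>\<omega>. z k \<omega> * Z \<omega>)"
    using k(4) Z(2) adapted_steps_measurable[OF assms(1,2)] measurable_F[OF Z(1)]
    by (intro integrable_mult_square_integrable)
  consider "u \<le> a k" | "a k < u" "e k \<le> u" | "a k < u" "u < e k"
    by linarith
  then show ?thesis
  proof cases
    case 1
    then have "truncate_ends u a e k = a k" "a k \<le> truncate_ends v a e k"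
      by (auto simp: truncate_ends_def)
    moreover have "(\<lambda>\<omega>. z k \<omega> * Z \<omega>) \<in> borel_measurable (F (a k))"
      using k(3) measurable_F_mono[OF 1 Z(1)] by measurable
    ultimately show ?thesis
      using integral_mult_increment[OF k(1) _ _ int] by simp
  next
    case 2
    then have "truncate_ends u a e k = truncate_ends v a e k"
      using assms(4) k by (auto simp: truncate_ends_def)
    then show ?thesis
      by simp
  next
    case 3
    then have "truncate_ends u a e k = u" "u \<le> truncate_ends v a e k"
      using assms(4) by (auto simp: truncate_ends_def)
    moreover have "(\<lambda>\<omega>. z k \<omega> * Z \<omega>) \<in> borel_measurable (F u)"
      using measurable_F_mono[OF less_imp_le[OF 3(1)] k(3)] Z(1) by measurable
    ultimately show ?thesis
      using integral_mult_increment[OF assms(3) _ _ int] by simp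
  qed
qed

lemma integral_mult_step_integral_truncate_ends_diff:
  assumes "adapted_steps K a e z" "0 \<le> u" "u \<le> v"
    and Z: "Z \<in> borel_measurable (F u)" "integrable M (\<lambda>\<omega>. (Z \<omega>)\<^sup>2)"
  shows "(\<integral>\<omega>. (step_integral B K a (truncate_ends v a e) z \<omega> -
      step_integral B K a (truncate_ends u a e) z \<omega>) * Z \<omega> \<partial>M) = 0"
proof -
  have "(step_integral B K a (truncate_ends v a e) z \<omega> - step_integral B K a (truncate_ends u a e) z \<omega>) * Z \<omega> =
      (\<Sum>k\<in>K. z k \<omega> * Z \<omega> * (B (truncate_ends v a e k) \<omega> - B (truncate_ends u a e k) \<omega>))" for \<omega>
    unfolding step_integral_def sum_subtractf[symmetric] sum_distrib_right
    by (intro sum.cong refl) (simp add: algebra_simps)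
  then show ?thesis
    using integral_mult_truncate_ends_increment[OF assms(1) _ assms(2-3) Z]
    by (simp add: Bochner_Integration.integral_sum)
qed

lemma doob_maximal_inequality_step_integral:
  fixes u :: "nat \<Rightarrow> real"
  assumes "adapted_steps K a e z" "0 \<le> u 0" "mono u" "0 < c"
  shows "c\<^sup>2 * prob {\<omega>\<in>space M. \<exists>i\<le>N. c \<le> \<bar>step_integral B K a (truncate_ends (u i) a e) z \<omega>\<bar>}
    \<le> (\<integral>\<omega>. (step_integral B K a (truncate_ends (u N) a e) z \<omega>)\<^sup>2 \<partial>M)"
proof (rule doob_maximal_inequality_square[where G = "\<lambda>i. F (u i)"])
  have u_nonneg: "0 \<le> u i" for i
    using assms(2) monoD[OF assms(3), of 0 i] by auto
  show "subalgebra M (F (u i))" for i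
    by (rule subalgebra_F)
  show "sets (F (u i)) \<subseteq> sets (F (u j))" if "i \<le> j" for i j
    using filtered_prob_space filtration.sets_F_mono[of "space M" F] monoD[OF assms(3) that]
    by (auto simp: filtered_prob_space_def)
  show "step_integral B K a (truncate_ends (u i) a e) z \<in> borel_measurable (F (u i))" for i
    using step_integral_truncate_ends_measurable_F[OF assms(1) u_nonneg] .
  show "integrable M (\<lambda>\<omega>. (step_integral B K a (truncate_ends (u i) a e) z \<omega>)\<^sup>2)" for i
    using ito_isometry_step_process(1)[OF adapted_steps_truncate_ends[OF assms(1)]] .
  show "(\<integral>\<omega>. (step_integral B K a (truncate_ends (u N) a e) z \<omega> -
      step_integral B K a (truncate_ends (u i) a e) z \<omega>) * Z \<omega> \<partial>M) = 0"
    if "i \<le> N" "Z \<in> borel_measurable (F (u i))" "integrable M (\<lambda>\<omega>. (Z \<omega>)\<^sup>2)" for i Z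
    using integral_mult_step_integral_truncate_ends_diff[OF assms(1) u_nonneg monoD[OF assms(3) that(1)] that(2,3)] .
qed (use assms in auto)

definition jointly_measurable_on :: "real set \<Rightarrow> (real \<Rightarrow> 'a \<Rightarrow> real) \<Rightarrow> bool" where
  "jointly_measurable_on S f \<longleftrightarrow> (\<lambda>(\<omega>, s). f s \<omega> * indicator S s) \<in> borel_measurable (M \<Otimes>\<^sub>M lborel)"

definition mean_square_dist :: "real set \<Rightarrow> (real \<Rightarrow> 'a \<Rightarrow> real) \<Rightarrow> (real \<Rightarrow> 'a \<Rightarrow> real) \<Rightarrow> ennreal" where
  "mean_square_dist S f g = (\<integral>\<^sup>+\<omega>. (\<integral>\<^sup>+s\<in>S. ennreal ((f s \<omega> - g s \<omega>)\<^sup>2) \<partial>lborel) \<partial>M)"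

lemma mean_square_dist_commute: "mean_square_dist S f g = mean_square_dist S g f"
  by (simp add: mean_square_dist_def power2_commute)

lemma mean_square_dist_mono: "S \<subseteq> S' \<Longrightarrow> mean_square_dist S f g \<le> mean_square_dist S' f g"
  unfolding mean_square_dist_def
  by (intro nn_integral_mono mult_left_mono) (auto split: split_indicator)

lemma jointly_measurable_on_step_process:
  assumes "adapted_steps K a e z" "S \<in> sets borel"
  shows "jointly_measurable_on S (step_process K a e z)"
proof -
  have "indicator S \<in> borel_measurable lborel"
    using assms(2) by (intro borel_measurable_indicator) simp
  from borel_measurable_times[OF step_process_measurable[OF assms(1), unfolded split_beta']
      measurable_compose[OF measurable_snd this]]
  show ?thesis
    unfolding jointly_measurable_on_def by (simp add: split_beta')
qed

lemma measurable_square_diff_indicator: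
  assumes "jointly_measurable_on S f" "jointly_measurable_on S g"
  shows "(\<lambda>(\<omega>, s). ennreal ((f s \<omega> - g s \<omega>)\<^sup>2) * indicator S s) \<in> borel_measurable (M \<Otimes>\<^sub>M lborel)"
proof -
  have "(\<lambda>(\<omega>, s). ennreal ((f s \<omega> - g s \<omega>)\<^sup>2) * indicator S s) =
      (\<lambda>p. ennreal (((\<lambda>(\<omega>, s). f s \<omega> * indicator S s) p - (\<lambda>(\<omega>, s). g s \<omega> * indicator S s) p)\<^sup>2))"
    by (auto simp: fun_eq_iff split: split_indicator)
  then show ?thesis
    using assms unfolding jointly_measurable_on_def by simp
qed

lemma mean_square_dist_triangle:
  assumes f: "jointly_measurable_on S f" and g: "jointly_measurable_on S g" and h: "jointly_measurable_on S h"
  shows "mean_square_dist S f h \<le> 2 * mean_square_dist S f g + 2 * mean_square_dist S g h"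
proof -
  note fg = measurable_square_diff_indicator[OF f g] and gh = measurable_square_diff_indicator[OF g h]
  have inner: "(\<integral>\<^sup>+s\<in>S. ennreal ((f s \<omega> - h s \<omega>)\<^sup>2) \<partial>lborel) \<le>
      2 * (\<integral>\<^sup>+s\<in>S. ennreal ((f s \<omega> - g s \<omega>)\<^sup>2) \<partial>lborel) + 2 * (\<integral>\<^sup>+s\<in>S. ennreal ((g s \<omega> - h s \<omega>)\<^sup>2) \<partial>lborel)"
    if "\<omega> \<in> space M" for \<omega>
  proof -
    have "(\<integral>\<^sup>+s\<in>S. ennreal ((f s \<omega> - h s \<omega>)\<^sup>2) \<partial>lborel) \<le>
        (\<integral>\<^sup>+s. 2 * (ennreal ((f s \<omega> - g s \<omega>)\<^sup>2) * indicator S s) +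
          2 * (ennreal ((g s \<omega> - h s \<omega>)\<^sup>2) * indicator S s) \<partial>lborel)"
      using ennreal_square_diff_le[of "f _ \<omega>" "h _ \<omega>" "g _ \<omega>"]
      by (intro nn_integral_mono) (auto split: split_indicator)
    also have "\<dots> = 2 * (\<integral>\<^sup>+s\<in>S. ennreal ((f s \<omega> - g s \<omega>)\<^sup>2) \<partial>lborel) +
        2 * (\<integral>\<^sup>+s\<in>S. ennreal ((g s \<omega> - h s \<omega>)\<^sup>2) \<partial>lborel)"
      using measurable_Pair2[OF fg that] measurable_Pair2[OF gh that]
      by (simp add: nn_integral_add nn_integral_cmult)
    finally show ?thesis .
  qed
  have "mean_square_dist S f h \<le> (\<integral>\<^sup>+\<omega>. 2 * (\<integral>\<^sup>+s\<in>S. ennreal ((f s \<omega> - g s \<omega>)\<^sup>2) \<partial>lborel) +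
      2 * (\<integral>\<^sup>+s\<in>S. ennreal ((g s \<omega> - h s \<omega>)\<^sup>2) \<partial>lborel) \<partial>M)"
    unfolding mean_square_dist_def using inner by (intro nn_integral_mono) auto
  also have "\<dots> = 2 * mean_square_dist S f g + 2 * mean_square_dist S g h"
    using lborel.borel_measurable_nn_integral[OF fg] lborel.borel_measurable_nn_integral[OF gh]
    unfolding mean_square_dist_def by (simp add: nn_integral_add nn_integral_cmult)
  finally show ?thesis .
qed

lemma ito_isometry_step_process_diff:
  assumes "adapted_steps K\<^sub>1 a\<^sub>1 e\<^sub>1 z\<^sub>1" "adapted_steps K\<^sub>2 a\<^sub>2 e\<^sub>2 z\<^sub>2"
    and "\<And>s \<omega>. s \<notin> S \<Longrightarrow> step_process K\<^sub>1 a\<^sub>1 e\<^sub>1 z\<^sub>1 s \<omega> = step_process K\<^sub>2 a\<^sub>2 e\<^sub>2 z\<^sub>2 s \<omega>"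
  shows "(\<integral>\<^sup>+\<omega>. ennreal ((step_integral B K\<^sub>1 a\<^sub>1 e\<^sub>1 z\<^sub>1 \<omega> - step_integral B K\<^sub>2 a\<^sub>2 e\<^sub>2 z\<^sub>2 \<omega>)\<^sup>2) \<partial>M) =
    mean_square_dist S (step_process K\<^sub>1 a\<^sub>1 e\<^sub>1 z\<^sub>1) (step_process K\<^sub>2 a\<^sub>2 e\<^sub>2 z\<^sub>2)"
proof -
  have fin: "finite K\<^sub>1" "finite K\<^sub>2"
    using assms by (auto simp: adapted_steps_def)
  have "(\<integral>\<^sup>+\<omega>. ennreal ((step_integral B K\<^sub>1 a\<^sub>1 e\<^sub>1 z\<^sub>1 \<omega> - step_integral B K\<^sub>2 a\<^sub>2 e\<^sub>2 z\<^sub>2 \<omega>)\<^sup>2) \<partial>M) =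
      (\<integral>\<^sup>+\<omega>. \<integral>\<^sup>+s. ennreal ((step_process K\<^sub>1 a\<^sub>1 e\<^sub>1 z\<^sub>1 s \<omega> - step_process K\<^sub>2 a\<^sub>2 e\<^sub>2 z\<^sub>2 s \<omega>)\<^sup>2) \<partial>lborel \<partial>M)"
    using ito_isometry_step_process(2)[OF adapted_steps_Plus[OF assms(1,2)]]
    by (simp add: step_integral_Plus[OF fin] step_process_Plus[OF fin])
  also have "\<dots> = mean_square_dist S (step_process K\<^sub>1 a\<^sub>1 e\<^sub>1 z\<^sub>1) (step_process K\<^sub>2 a\<^sub>2 e\<^sub>2 z\<^sub>2)"
    unfolding mean_square_dist_def
    by (intro nn_integral_cong) (auto simp: assms(3) split: split_indicator)
  finally show ?thesis .
qed

lemma mean_square_dist_truncate_ends: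
  "mean_square_dist {0..u} (step_process K a (truncate_ends u a e) z) g =
    mean_square_dist {0..u} (step_process K a e z) g"
  unfolding mean_square_dist_def
proof (rule nn_integral_cong)
  fix \<omega>
  have "AE s in lborel. ennreal ((step_process K a (truncate_ends u a e) z s \<omega> - g s \<omega>)\<^sup>2) * indicator {0..u} s =
      ennreal ((step_process K a e z s \<omega> - g s \<omega>)\<^sup>2) * indicator {0..u} s"
    using AE_lborel_singleton[of u]
    by eventually_elim (auto simp: step_process_truncate_ends split: split_indicator)
  then show "(\<integral>\<^sup>+s\<in>{0..u}. ennreal ((step_process K a (truncate_ends u a e) z s \<omega> - g s \<omega>)\<^sup>2) \<partial>lborel) =
      (\<integral>\<^sup>+s\<in>{0..u}. ennreal ((step_process K a e z s \<omega> - g s \<omega>)\<^sup>2) \<partial>lborel)"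
    by (rule nn_integral_cong_AE)
qed

lemma ito_isometry_step_process_on:
  assumes "adapted_steps K a e z" "\<And>s \<omega>. s \<notin> S \<Longrightarrow> step_process K a e z s \<omega> = 0"
  shows "(\<integral>\<^sup>+\<omega>. ennreal ((step_integral B K a e z \<omega>)\<^sup>2) \<partial>M) =
    mean_square_dist S (step_process K a e z) (\<lambda>_ _. 0)"
proof -
  let ?none = "{} :: nat set"
  have none: "step_integral B ?none a' e' z' = (\<lambda>_. 0)" "step_process ?none a' e' z' = (\<lambda>_ _. 0)"
    for a' e' z'
    by (simp_all add: fun_eq_iff step_integral_def step_process_def)
  have "(\<integral>\<^sup>+\<omega>. ennreal ((step_integral B K a e z \<omega> - step_integral B ?none (\<lambda>_. 0) (\<lambda>_. 0) (\<lambda>_ _. 0) \<omega>)\<^sup>2) \<partial>M) =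
      mean_square_dist S (step_process K a e z) (step_process ?none (\<lambda>_. 0) (\<lambda>_. 0) (\<lambda>_ _. 0))"
    by (rule ito_isometry_step_process_diff) (use assms in \<open>auto simp: adapted_steps_def none\<close>)
  then show ?thesis
    by (simp add: none)
qed

lemma step_process_truncate_ends_eq_0:
  assumes "adapted_steps K a e z" "s \<notin> {0..u}"
  shows "step_process K a (truncate_ends u a e) z s \<omega> = 0"
  using assms by (force simp: step_process_truncate_ends adapted_steps_def intro: step_process_eq_0)

lemma adapted_steps_simple_process:
  assumes "simple_process M F T n tk \<xi>"
  shows "adapted_steps {..<n} tk (tk \<circ> Suc) \<xi>"
  using assms simple_process_partition_bounds(1)[OF assms]
  by (auto simp: adapted_steps_def simple_process_def less_imp_le)

lemma step_process_simple_process_eq_0: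
  assumes "simple_process M F T n tk \<xi>" "s \<notin> {0..T}"
  shows "step_process {..<n} tk (tk \<circ> Suc) \<xi> s \<omega> = 0"
proof (rule step_process_eq_0)
  fix k assume "k \<in> {..<n}"
  then have "0 \<le> tk k" "tk (Suc k) \<le> T"
    using simple_process_partition_bounds[OF assms(1)] by auto
  then show "s \<notin> {tk k..<(tk \<circ> Suc) k}"
    using assms(2) by auto
qed

end

section \<open>A maximal inequality for the Ito integral\<close>

lemma dyadic_approximation:
  fixes T t :: real
  assumes "0 < T" "t \<in> {0..T}"
  obtains i :: "nat \<Rightarrow> nat" where "\<And>N. i N \<le> 2 ^ N" "(\<lambda>N. real (i N) * T / 2 ^ N) \<longlonglongrightarrow> t"
proof
  define i where "i N = nat \<lfloor>t * 2 ^ N / T\<rfloor>" for N :: nat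
  have nonneg: "0 \<le> t * 2 ^ N / T" for N
    using assms by simp
  have i_le: "real (i N) \<le> t * 2 ^ N / T" and i_gt: "t * 2 ^ N / T < real (i N) + 1" for N
    unfolding i_def using nonneg[of N] by linarith+
  show "i N \<le> 2 ^ N" for N
  proof -
    have "t * 2 ^ N / T \<le> 2 ^ N"
      using assms by (simp add: field_simps)
    then have "real (i N) \<le> 2 ^ N"
      using i_le[of N] by linarith
    then show ?thesis
      by (metis of_nat_le_iff of_nat_numeral of_nat_power)
  qed
  have upper: "real (i N) * T / 2 ^ N \<le> t" and lower: "t - T / 2 ^ N < real (i N) * T / 2 ^ N" for N
  proof -
    show "real (i N) * T / 2 ^ N \<le> t"
      using i_le[of N] \<open>0 < T\<close> by (simp add: field_simps)
    have "(t * 2 ^ N / T - 1) * (T / 2 ^ N) < real (i N) * (T / 2 ^ N)"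
      using i_gt[of N] \<open>0 < T\<close> by (intro mult_strict_right_mono) auto
    moreover have "(t * 2 ^ N / T - 1) * (T / 2 ^ N) = t - T / 2 ^ N"
      using \<open>0 < T\<close> by (simp add: field_simps)
    ultimately show "t - T / 2 ^ N < real (i N) * T / 2 ^ N"
      by simp
  qed
  have "(\<lambda>N. t - T / 2 ^ N) \<longlonglongrightarrow> t - 0"
    by (intro tendsto_diff tendsto_const LIMSEQ_divide_realpow_zero) auto
  moreover have "\<forall>\<^sub>F N in sequentially. t - T / 2 ^ N \<le> real (i N) * T / 2 ^ N"
    by (intro always_eventually allI less_imp_le[OF lower])
  moreover have "\<forall>\<^sub>F N in sequentially. real (i N) * T / 2 ^ N \<le> t"
    by (intro always_eventually allI upper)
  ultimately show "(\<lambda>N. real (i N) * T / 2 ^ N) \<longlonglongrightarrow> t"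
    using tendsto_sandwich[OF _ _ _ tendsto_const] by simp
qed

lemma continuous_abs_le_from_dyadic:
  fixes f :: "real \<Rightarrow> real"
  assumes f: "continuous_on {0..T} f" and "0 < T"
    and dyadic: "\<And>N i. i \<le> 2 ^ N \<Longrightarrow> \<bar>f (real i * T / 2 ^ N)\<bar> \<le> c"
    and t: "t \<in> {0..T}"
  shows "\<bar>f t\<bar> \<le> c"
proof -
  obtain i where i: "\<And>N. i N \<le> 2 ^ N" and lim: "(\<lambda>N. real (i N) * T / 2 ^ N) \<longlonglongrightarrow> t"
    using dyadic_approximation[OF \<open>0 < T\<close> t] by blast
  have "real (i N) \<le> 2 ^ N" for N
    using i[of N] by (metis of_nat_le_iff of_nat_numeral of_nat_power)
  then have "real (i N) * T / 2 ^ N \<in> {0..T}" for N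
    using \<open>0 < T\<close> by (simp add: field_simps)
  then have "(\<lambda>N. f (real (i N) * T / 2 ^ N)) \<longlonglongrightarrow> f t"
    using t by (intro continuous_on_tendsto_compose[OF f lim]) auto
  then have "(\<lambda>N. \<bar>f (real (i N) * T / 2 ^ N)\<bar>) \<longlonglongrightarrow> \<bar>f t\<bar>"
    by (rule tendsto_rabs)
  then show ?thesis
    by (rule tendsto_upperbound) (use dyadic[OF i] in auto)
qed

locale ito_integral = wiener_filtration +
  fixes b I :: "real \<Rightarrow> 'a \<Rightarrow> real"
  assumes progressive: "progressive F b"
    and ito_integral_at: "\<And>T. 0 \<le> T \<Longrightarrow> ito_integral_at M F B b T (I T)"
begin

lemma I_measurable: "0 \<le> T \<Longrightarrow> I T \<in> borel_measurable M"
  using ito_integral_at by (simp add: ito_integral_at_def)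

lemma ito_integral_atE:
  assumes "0 \<le> T"
  obtains n tk \<xi> where "\<And>m. simple_process M F T (n m) (tk m) (\<xi> m)"
    and "(\<lambda>m. mean_square_dist {0..T} (step_process {..<n m} (tk m) (tk m \<circ> Suc) (\<xi> m)) b) \<longlonglongrightarrow> 0"
    and "(\<lambda>m. \<integral>\<^sup>+\<omega>. ennreal ((I T \<omega> - step_integral B {..<n m} (tk m) (tk m \<circ> Suc) (\<xi> m) \<omega>)\<^sup>2) \<partial>M)
      \<longlonglongrightarrow> 0"
  using ito_integral_at[OF assms]
  unfolding ito_integral_at_def mean_square_dist_def simple_val_eq_step_process simple_int_eq_step_integral
  by blast

lemma jointly_measurable_on_b:
  assumes "0 \<le> T"
  shows "jointly_measurable_on {0..T} b"
proof -
  have prog: "(\<lambda>(s, \<omega>). b s \<omega>) \<in> borel_measurable (restrict_space borel {0..T} \<Otimes>\<^sub>M F T)"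
    using progressive assms by (simp add: progressive_def)
  define clamp where "clamp s = max 0 (min T s)" for s :: real
  have "(\<lambda>\<omega>. \<omega>) \<in> measurable M (F T)"
    using subalgebra_F[of T] sets.sets_into_space[of _ "F T"]
    by (auto simp: measurable_def subalgebra_def Int_absorb2)
  then have "(\<lambda>p. (clamp (snd p), fst p)) \<in> measurable (M \<Otimes>\<^sub>M lborel) (restrict_space borel {0..T} \<Otimes>\<^sub>M F T)"
    by (intro measurable_Pair measurable_restrict_space2 measurable_compose[OF measurable_fst])
      (auto simp: clamp_def assms)
  from measurable_compose[OF this prog]
  have [measurable]: "(\<lambda>p. b (clamp (snd p)) (fst p)) \<in> borel_measurable (M \<Otimes>\<^sub>M lborel)"
    by simp
  have "(\<lambda>(\<omega>, s). b s \<omega> * indicator {0..T} s) = (\<lambda>p. b (clamp (snd p)) (fst p) * indicator {0..T} (snd p))"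
    by (auto simp: fun_eq_iff clamp_def split: split_indicator)
  then show ?thesis
    unfolding jointly_measurable_on_def by simp
qed

lemma nn_integral_step_integral_truncate_ends_diff_le:
  assumes simple: "simple_process M F u n tk \<eta>" and steps: "adapted_steps K a e z" and "0 \<le> u" "u \<le> T"
  shows "(\<integral>\<^sup>+\<omega>. ennreal ((step_integral B {..<n} tk (tk \<circ> Suc) \<eta> \<omega> -
      step_integral B K a (truncate_ends u a e) z \<omega>)\<^sup>2) \<partial>M) \<le>
    2 * mean_square_dist {0..u} (step_process {..<n} tk (tk \<circ> Suc) \<eta>) b +
    2 * mean_square_dist {0..T} (step_process K a e z) b"
proof -
  let ?W = "step_process {..<n} tk (tk \<circ> Suc) \<eta>"
  note W_steps = adapted_steps_simple_process[OF simple]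
  have "(\<integral>\<^sup>+\<omega>. ennreal ((step_integral B {..<n} tk (tk \<circ> Suc) \<eta> \<omega> -
      step_integral B K a (truncate_ends u a e) z \<omega>)\<^sup>2) \<partial>M) =
      mean_square_dist {0..u} ?W (step_process K a (truncate_ends u a e) z)"
    by (intro ito_isometry_step_process_diff W_steps adapted_steps_truncate_ends[OF steps])
      (simp add: step_process_truncate_ends_eq_0[OF steps] step_process_simple_process_eq_0[OF simple])
  also have "\<dots> = mean_square_dist {0..u} ?W (step_process K a e z)"
    by (subst (1 2) mean_square_dist_commute) (rule mean_square_dist_truncate_ends)
  also have "\<dots> \<le> 2 * mean_square_dist {0..u} ?W b + 2 * mean_square_dist {0..u} b (step_process K a e z)"
    using W_steps steps jointly_measurable_on_b \<open>0 \<le> u\<close>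
    by (intro mean_square_dist_triangle jointly_measurable_on_step_process) auto
  also have "\<dots> \<le> 2 * mean_square_dist {0..u} ?W b + 2 * mean_square_dist {0..T} (step_process K a e z) b"
    using \<open>u \<le> T\<close> by (auto simp: mean_square_dist_commute intro!: add_left_mono mult_left_mono mean_square_dist_mono)
  finally show ?thesis .
qed

lemma tendsto_step_integral_truncate_ends:
  assumes u: "0 \<le> u" "u \<le> T"
    and steps: "\<And>m. adapted_steps (K m) (a m) (e m) (z m)"
    and approx: "(\<lambda>m. mean_square_dist {0..T} (step_process (K m) (a m) (e m) (z m)) b) \<longlonglongrightarrow> 0"
  shows "(\<lambda>m. \<integral>\<^sup>+\<omega>. ennreal ((I u \<omega> - step_integral B (K m) (a m) (truncate_ends u (a m) (e m)) (z m) \<omega>)\<^sup>2) \<partial>M)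
    \<longlonglongrightarrow> 0"
proof -
  obtain n tk \<eta> where simple: "\<And>m. simple_process M F u (n m) (tk m) (\<eta> m)"
    and W_approx: "(\<lambda>m. mean_square_dist {0..u} (step_process {..<n m} (tk m) (tk m \<circ> Suc) (\<eta> m)) b) \<longlonglongrightarrow> 0"
    and W_conv: "(\<lambda>m. \<integral>\<^sup>+\<omega>. ennreal ((I u \<omega> - step_integral B {..<n m} (tk m) (tk m \<circ> Suc) (\<eta> m) \<omega>)\<^sup>2) \<partial>M)
      \<longlonglongrightarrow> 0"
    using ito_integral_atE[OF u(1)] by blast
  define W where "W m = step_integral B {..<n m} (tk m) (tk m \<circ> Suc) (\<eta> m)" for m
  define J where "J m = step_integral B (K m) (a m) (truncate_ends u (a m) (e m)) (z m)" for m
  define G where "G m = 2 * (\<integral>\<^sup>+\<omega>. ennreal ((I u \<omega> - W m \<omega>)\<^sup>2) \<partial>M) +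
    2 * (2 * mean_square_dist {0..u} (step_process {..<n m} (tk m) (tk m \<circ> Suc) (\<eta> m)) b +
      2 * mean_square_dist {0..T} (step_process (K m) (a m) (e m) (z m)) b)" for m
  have bound: "(\<integral>\<^sup>+\<omega>. ennreal ((I u \<omega> - J m \<omega>)\<^sup>2) \<partial>M) \<le> G m" for m
  proof -
    have "(\<integral>\<^sup>+\<omega>. ennreal ((I u \<omega> - J m \<omega>)\<^sup>2) \<partial>M) \<le>
        2 * (\<integral>\<^sup>+\<omega>. ennreal ((I u \<omega> - W m \<omega>)\<^sup>2) \<partial>M) + 2 * (\<integral>\<^sup>+\<omega>. ennreal ((W m \<omega> - J m \<omega>)\<^sup>2) \<partial>M)"
      unfolding J_def W_def using I_measurable[OF u(1)]
        step_integral_measurable[OF adapted_steps_simple_process[OF simple]]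
        step_integral_measurable[OF adapted_steps_truncate_ends[OF steps]]
      by (rule nn_integral_square_diff_le)
    also have "\<dots> \<le> G m"
      unfolding G_def W_def J_def
      by (intro add_left_mono mult_left_mono nn_integral_step_integral_truncate_ends_diff_le simple steps u) simp
    finally show ?thesis .
  qed
  have "G \<longlonglongrightarrow> 2 * 0 + 2 * (2 * 0 + 2 * 0)"
    unfolding G_def W_def using W_conv W_approx approx
    by (intro tendsto_add ennreal_tendsto_cmult) auto
  then have "G \<longlonglongrightarrow> 0"
    by simp
  then show ?thesis
    by (rule tendsto_sandwich[of "\<lambda>_. 0" _ sequentially G, rotated 3]) (use bound in \<open>auto simp: J_def\<close>)
qed

lemma emeasure_max_truncated_step_integral_le:
  fixes u :: "nat \<Rightarrow> real"
  assumes steps: "adapted_steps K a e z" and u: "0 \<le> u 0" "mono u" "u N \<le> T" and "0 < c"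
  shows "emeasure M {\<omega>\<in>space M. \<exists>i\<le>N. c \<le> \<bar>step_integral B K a (truncate_ends (u i) a e) z \<omega>\<bar>} \<le>
    ennreal (1 / c\<^sup>2) *
      (2 * mean_square_dist {0..T} (step_process K a e z) b + 2 * mean_square_dist {0..T} b (\<lambda>_ _. 0))"
proof -
  let ?S = "{\<omega>\<in>space M. \<exists>i\<le>N. c \<le> \<bar>step_integral B K a (truncate_ends (u i) a e) z \<omega>\<bar>}"
  let ?J = "step_integral B K a (truncate_ends (u N) a e) z"
  have "0 \<le> u N"
    using u monoD[OF u(2), of 0 N] by auto
  then have "0 \<le> T"
    using u(3) by linarith
  note trunc_steps = adapted_steps_truncate_ends[OF steps, of "u N"]
  have "c\<^sup>2 * prob ?S \<le> (\<integral>\<omega>. (?J \<omega>)\<^sup>2 \<partial>M)"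
    by (rule doob_maximal_inequality_step_integral[OF steps u(1,2) \<open>0 < c\<close>])
  then have "prob ?S \<le> 1 / c\<^sup>2 * (\<integral>\<omega>. (?J \<omega>)\<^sup>2 \<partial>M)"
    using \<open>0 < c\<close> by (simp add: field_simps)
  then have "emeasure M ?S \<le> ennreal (1 / c\<^sup>2 * (\<integral>\<omega>. (?J \<omega>)\<^sup>2 \<partial>M))"
    by (simp add: emeasure_eq_measure ennreal_leI)
  also have "\<dots> = ennreal (1 / c\<^sup>2) * ennreal (\<integral>\<omega>. (?J \<omega>)\<^sup>2 \<partial>M)"
    by (rule ennreal_mult) auto
  also have "ennreal (\<integral>\<omega>. (?J \<omega>)\<^sup>2 \<partial>M) = (\<integral>\<^sup>+\<omega>. ennreal ((?J \<omega>)\<^sup>2) \<partial>M)"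
    using ito_isometry_step_process(1)[OF trunc_steps] by (intro nn_integral_eq_integral[symmetric]) auto
  also have "\<dots> = mean_square_dist {0..u N} (step_process K a (truncate_ends (u N) a e) z) (\<lambda>_ _. 0)"
    using step_process_truncate_ends_eq_0[OF steps] by (intro ito_isometry_step_process_on trunc_steps)
  also have "\<dots> = mean_square_dist {0..u N} (step_process K a e z) (\<lambda>_ _. 0)"
    by (rule mean_square_dist_truncate_ends)
  also have "\<dots> \<le> mean_square_dist {0..T} (step_process K a e z) (\<lambda>_ _. 0)"
    using u(3) by (intro mean_square_dist_mono) auto
  also have "\<dots> \<le> 2 * mean_square_dist {0..T} (step_process K a e z) b + 2 * mean_square_dist {0..T} b (\<lambda>_ _. 0)"
    using steps jointly_measurable_on_b[OF \<open>0 \<le> T\<close>]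
    by (intro mean_square_dist_triangle jointly_measurable_on_step_process) (auto simp: jointly_measurable_on_def)
  finally show ?thesis
    by (simp add: mult_left_mono)
qed

lemma emeasure_grid_exceed_le_approximation:
  fixes u :: "nat \<Rightarrow> real"
  assumes steps: "adapted_steps K a e z" and u: "0 \<le> u 0" "mono u" "u N \<le> T" and "0 < c"
  shows "emeasure M {\<omega>\<in>space M. \<exists>i\<le>N. c < \<bar>I (u i) \<omega>\<bar>} \<le>
    ennreal (4 / c\<^sup>2) * (2 * mean_square_dist {0..T} (step_process K a e z) b + 2 * mean_square_dist {0..T} b (\<lambda>_ _. 0)) +
    (\<Sum>i\<le>N. ennreal (4 / c\<^sup>2) *
      (\<integral>\<^sup>+\<omega>. ennreal ((I (u i) \<omega> - step_integral B K a (truncate_ends (u i) a e) z \<omega>)\<^sup>2) \<partial>M))"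
proof -
  define J where "J i = step_integral B K a (truncate_ends (u i) a e) z" for i
  have [measurable]: "I (u i) \<in> borel_measurable M" "J i \<in> borel_measurable M" for i
    using I_measurable u monoD[OF u(2), of 0 i] step_integral_measurable[OF adapted_steps_truncate_ends[OF steps]]
    by (auto simp: J_def)
  define S\<^sub>1 where "S\<^sub>1 = {\<omega>\<in>space M. \<exists>i\<le>N. c / 2 \<le> \<bar>J i \<omega>\<bar>}"
  define S\<^sub>2 where "S\<^sub>2 i = {\<omega>\<in>space M. c / 2 \<le> \<bar>I (u i) \<omega> - J i \<omega>\<bar>}" for i
  have [measurable]: "S\<^sub>1 \<in> sets M" "S\<^sub>2 i \<in> sets M" for i
    unfolding S\<^sub>1_def S\<^sub>2_def by measurable
  have four: "ennreal (1 / (c / 2)\<^sup>2) = ennreal (4 / c\<^sup>2)"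
    by (simp add: power_divide)
  have "{\<omega>\<in>space M. \<exists>i\<le>N. c < \<bar>I (u i) \<omega>\<bar>} \<subseteq> S\<^sub>1 \<union> (\<Union>i\<le>N. S\<^sub>2 i)"
  proof
    fix \<omega> assume "\<omega> \<in> {\<omega>\<in>space M. \<exists>i\<le>N. c < \<bar>I (u i) \<omega>\<bar>}"
    then obtain i where i: "\<omega> \<in> space M" "i \<le> N" "c < \<bar>I (u i) \<omega>\<bar>"
      by blast
    then have "c / 2 \<le> \<bar>J i \<omega>\<bar> \<or> c / 2 \<le> \<bar>I (u i) \<omega> - J i \<omega>\<bar>"
      by linarith
    then show "\<omega> \<in> S\<^sub>1 \<union> (\<Union>i\<le>N. S\<^sub>2 i)"
      using i unfolding S\<^sub>1_def S\<^sub>2_def by blast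
  qed
  then have "emeasure M {\<omega>\<in>space M. \<exists>i\<le>N. c < \<bar>I (u i) \<omega>\<bar>} \<le> emeasure M (S\<^sub>1 \<union> (\<Union>i\<le>N. S\<^sub>2 i))"
    by (rule emeasure_mono) simp
  also have "\<dots> \<le> emeasure M S\<^sub>1 + emeasure M (\<Union>i\<le>N. S\<^sub>2 i)"
    by (rule emeasure_subadditive) auto
  also have "\<dots> \<le> emeasure M S\<^sub>1 + (\<Sum>i\<le>N. emeasure M (S\<^sub>2 i))"
    by (intro add_left_mono emeasure_subadditive_finite) auto
  also have "\<dots> \<le> ennreal (4 / c\<^sup>2) *
      (2 * mean_square_dist {0..T} (step_process K a e z) b + 2 * mean_square_dist {0..T} b (\<lambda>_ _. 0)) +
      (\<Sum>i\<le>N. ennreal (4 / c\<^sup>2) * (\<integral>\<^sup>+\<omega>. ennreal ((I (u i) \<omega> - J i \<omega>)\<^sup>2) \<partial>M))"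
  proof (intro add_mono sum_mono)
    show "emeasure M S\<^sub>1 \<le> ennreal (4 / c\<^sup>2) *
        (2 * mean_square_dist {0..T} (step_process K a e z) b + 2 * mean_square_dist {0..T} b (\<lambda>_ _. 0))"
      using emeasure_max_truncated_step_integral_le[OF steps u, of "c / 2"] \<open>0 < c\<close>
      unfolding S\<^sub>1_def J_def four by simp
    show "emeasure M (S\<^sub>2 i) \<le> ennreal (4 / c\<^sup>2) * (\<integral>\<^sup>+\<omega>. ennreal ((I (u i) \<omega> - J i \<omega>)\<^sup>2) \<partial>M)" for i
      using emeasure_abs_ge_le_nn_integral_square[of "\<lambda>\<omega>. I (u i) \<omega> - J i \<omega>" M "c / 2"] \<open>0 < c\<close>
      unfolding S\<^sub>2_def four by simp
  qed
  finally show ?thesis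
    unfolding J_def .
qed

lemma emeasure_grid_exceed_le:
  fixes u :: "nat \<Rightarrow> real"
  assumes u: "0 \<le> u 0" "mono u" "u N \<le> T" and "0 < c"
  shows "emeasure M {\<omega>\<in>space M. \<exists>i\<le>N. c < \<bar>I (u i) \<omega>\<bar>} \<le>
    ennreal (8 / c\<^sup>2) * mean_square_dist {0..T} b (\<lambda>_ _. 0)"
proof -
  have u_nonneg: "0 \<le> u i" for i
    using u monoD[OF u(2), of 0 i] by auto
  obtain n tk \<xi> where simple: "\<And>m. simple_process M F T (n m) (tk m) (\<xi> m)"
    and approx: "(\<lambda>m. mean_square_dist {0..T} (step_process {..<n m} (tk m) (tk m \<circ> Suc) (\<xi> m)) b) \<longlonglongrightarrow> 0"
    by (rule ito_integral_atE[OF order_trans[OF u_nonneg u(3)]], rule that)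
  note steps = adapted_steps_simple_process[OF simple]
  define A where "A m = mean_square_dist {0..T} (step_process {..<n m} (tk m) (tk m \<circ> Suc) (\<xi> m)) b" for m
  define D where "D m i = (\<integral>\<^sup>+\<omega>. ennreal ((I (u i) \<omega> -
    step_integral B {..<n m} (tk m) (truncate_ends (u i) (tk m) (tk m \<circ> Suc)) (\<xi> m) \<omega>)\<^sup>2) \<partial>M)" for m i
  define E where "E = mean_square_dist {0..T} b (\<lambda>_ _. 0)"
  have "(\<lambda>m. D m i) \<longlonglongrightarrow> 0" if "i \<le> N" for i
    unfolding D_def using u_nonneg monoD[OF u(2) that] u(3) steps approx
    by (intro tendsto_step_integral_truncate_ends) auto
  then have "(\<lambda>m. ennreal (4 / c\<^sup>2) * (2 * A m + 2 * E) + (\<Sum>i\<le>N. ennreal (4 / c\<^sup>2) * D m i))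
      \<longlonglongrightarrow> ennreal (4 / c\<^sup>2) * (2 * 0 + 2 * E) + (\<Sum>i\<le>N. ennreal (4 / c\<^sup>2) * 0)"
    using approx unfolding A_def
    by (intro tendsto_add ennreal_tendsto_cmult tendsto_sum tendsto_const) auto
  then have "emeasure M {\<omega>\<in>space M. \<exists>i\<le>N. c < \<bar>I (u i) \<omega>\<bar>} \<le>
      ennreal (4 / c\<^sup>2) * (2 * 0 + 2 * E) + (\<Sum>i\<le>N. ennreal (4 / c\<^sup>2) * 0)"
    by (rule tendsto_lowerbound)
      (use emeasure_grid_exceed_le_approximation[OF steps u \<open>0 < c\<close>] in \<open>auto simp: A_def D_def E_def\<close>)
  also have "\<dots> = ennreal (8 / c\<^sup>2) * E"
    using ennreal_mult[of "4 / c\<^sup>2" 2] by (simp add: mult.assoc[symmetric])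
  finally show ?thesis
    unfolding E_def .
qed

lemma maximal_inequality:
  assumes "0 < T" "0 < c"
  obtains A where "A \<in> sets M" "emeasure M A \<le> ennreal (8 / c\<^sup>2) * mean_square_dist {0..T} b (\<lambda>_ _. 0)"
    and "\<And>\<omega> t. \<omega> \<in> space M - A \<Longrightarrow> continuous_on {0..T} (\<lambda>t. I t \<omega>) \<Longrightarrow> t \<in> {0..T} \<Longrightarrow> \<bar>I t \<omega>\<bar> \<le> c"
proof
  define A where "A N = {\<omega>\<in>space M. \<exists>i\<le>(2::nat) ^ N. c < \<bar>I (real i * T / 2 ^ N) \<omega>\<bar>}" for N
  have [measurable]: "I (real i * T / 2 ^ N) \<in> borel_measurable M" for i N
    using I_measurable \<open>0 < T\<close> by simp
  have A_sets: "A N \<in> sets M" for N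
    unfolding A_def by measurable
  then show "(\<Union>N. A N) \<in> sets M"
    by blast
  have "incseq A"
  proof (rule incseq_SucI, rule subsetI)
    fix N \<omega> assume "\<omega> \<in> A N"
    then obtain i where "\<omega> \<in> space M" "i \<le> 2 ^ N" "c < \<bar>I (real i * T / 2 ^ N) \<omega>\<bar>"
      unfolding A_def by blast
    moreover have "real (2 * i) * T / 2 ^ Suc N = real i * T / 2 ^ N"
      by simp
    ultimately show "\<omega> \<in> A (Suc N)"
      unfolding A_def by (intro CollectI conjI exI[of _ "2 * i"]) auto
  qed
  have "emeasure M (A N) \<le> ennreal (8 / c\<^sup>2) * mean_square_dist {0..T} b (\<lambda>_ _. 0)" for N
    unfolding A_def using \<open>0 < T\<close> \<open>0 < c\<close>
    by (intro emeasure_grid_exceed_le[where u = "\<lambda>i. real i * T / 2 ^ N"])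
      (auto simp: mono_def divide_right_mono mult_right_mono)
  moreover have "range A \<subseteq> sets M"
    using A_sets by blast
  then have "emeasure M (\<Union>N. A N) = (SUP N. emeasure M (A N))"
    using SUP_emeasure_incseq \<open>incseq A\<close> by metis
  ultimately show "emeasure M (\<Union>N. A N) \<le> ennreal (8 / c\<^sup>2) * mean_square_dist {0..T} b (\<lambda>_ _. 0)"
    by (simp add: SUP_le_iff)
  show "\<bar>I t \<omega>\<bar> \<le> c" if "\<omega> \<in> space M - (\<Union>N. A N)" "continuous_on {0..T} (\<lambda>t. I t \<omega>)" "t \<in> {0..T}"
    for \<omega> t
    using that(1) by (intro continuous_abs_le_from_dyadic[OF that(2) \<open>0 < T\<close> _ that(3)]) (auto simp: A_def not_less)
qed

lemma mean_square_dist_b_zero_eq: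
  assumes "0 \<le> T"
  shows "mean_square_dist {0..T} b (\<lambda>_ _. 0) = (\<integral>\<^sup>+s\<in>{0..T}. (\<integral>\<^sup>+\<omega>. ennreal ((b s \<omega>)\<^sup>2) \<partial>M) \<partial>lborel)"
proof -
  interpret pair_sigma_finite M lborel
    by (intro pair_sigma_finite.intro sigma_finite_lborel) unfold_locales
  have [measurable]: "(\<lambda>(\<omega>, s). b s \<omega> * indicator {0..T} s) \<in> borel_measurable (M \<Otimes>\<^sub>M lborel)"
    using jointly_measurable_on_b[OF assms] by (simp add: jointly_measurable_on_def)
  have "(\<lambda>p. ennreal (((\<lambda>(\<omega>, s). b s \<omega> * indicator {0..T} s) p)\<^sup>2)) \<in> borel_measurable (M \<Otimes>\<^sub>M lborel)"
    by measurable
  moreover have "ennreal ((b s \<omega> * indicator {0..T} s)\<^sup>2) = ennreal ((b s \<omega>)\<^sup>2) * indicator {0..T} s" for s \<omega>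
    by (simp split: split_indicator)
  ultimately have "(\<lambda>(\<omega>, s). ennreal ((b s \<omega>)\<^sup>2) * indicator {0..T} s) \<in> borel_measurable (M \<Otimes>\<^sub>M lborel)"
    by (simp add: split_beta')
  from Fubini'[OF this]
  have "mean_square_dist {0..T} b (\<lambda>_ _. 0) =
      (\<integral>\<^sup>+s. (\<integral>\<^sup>+\<omega>. ennreal ((b s \<omega>)\<^sup>2) * indicator {0..T} s \<partial>M) \<partial>lborel)"
    by (simp add: mean_square_dist_def)
  also have "\<dots> = (\<integral>\<^sup>+s\<in>{0..T}. (\<integral>\<^sup>+\<omega>. ennreal ((b s \<omega>)\<^sup>2) \<partial>M) \<partial>lborel)"
    by (intro nn_integral_cong) (simp split: split_indicator)
  finally show ?thesis .
qed

lemma mean_square_dist_b_zero_le: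
  assumes moments: "\<And>t. t \<ge> 0 \<Longrightarrow> (\<integral>\<^sup>+\<omega>. ennreal ((b t \<omega>)\<^sup>2) \<partial>M) \<le> ennreal (C * (1 + t powr (2 * \<beta>)))"
    and "0 \<le> C" "0 \<le> \<beta>" "1 \<le> T"
  shows "mean_square_dist {0..T} b (\<lambda>_ _. 0) \<le> ennreal (2 * C * T powr (2 * \<beta> + 1))"
proof -
  have "C * (1 + s powr (2 * \<beta>)) \<le> 2 * C * T powr (2 * \<beta>)" if "s \<in> {0..T}" for s
  proof -
    have "1 \<le> T powr (2 * \<beta>)" "s powr (2 * \<beta>) \<le> T powr (2 * \<beta>)"
      using that assms(3,4) by (auto intro: ge_one_powr_ge_zero powr_mono2)
    then have "C * 1 \<le> C * T powr (2 * \<beta>)" "C * s powr (2 * \<beta>) \<le> C * T powr (2 * \<beta>)"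
      using \<open>0 \<le> C\<close> by (intro mult_left_mono; simp)+
    then show ?thesis
      by (simp add: distrib_left mult.assoc)
  qed
  then have "(\<integral>\<^sup>+\<omega>. ennreal ((b s \<omega>)\<^sup>2) \<partial>M) \<le> ennreal (2 * C * T powr (2 * \<beta>))"
    if "s \<in> {0..T}" for s
    using order_trans[OF moments ennreal_leI] that by simp
  then have "(\<integral>\<^sup>+s\<in>{0..T}. (\<integral>\<^sup>+\<omega>. ennreal ((b s \<omega>)\<^sup>2) \<partial>M) \<partial>lborel) \<le>
      (\<integral>\<^sup>+s\<in>{0..T}. ennreal (2 * C * T powr (2 * \<beta>)) \<partial>lborel)"
    by (intro nn_integral_mono) (simp split: split_indicator)
  also have "\<dots> = ennreal (2 * C * T powr (2 * \<beta> + 1))"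
    using assms by (simp add: nn_integral_cmult_indicator ennreal_mult[symmetric] powr_add)
  finally show ?thesis
    using assms(4) by (simp add: mean_square_dist_b_zero_eq)
qed

end

section \<open>Growth of the Ito integral on dyadic blocks\<close>

lemma dyadic_block_index:
  fixes t :: real
  assumes "2 ^ k\<^sub>0 \<le> t"
  obtains k where "k\<^sub>0 \<le> k" "t \<in> {2 ^ k..2 ^ Suc k}"
proof
  have "(1::real) \<le> 2 ^ k\<^sub>0"
    by simp
  then have "1 \<le> t"
    using assms by linarith
  define k where "k = nat \<lfloor>log 2 t\<rfloor>"
  have "log 2 (2 ^ k\<^sub>0) \<le> log 2 t"
    using assms \<open>1 \<le> t\<close> by (subst log_le_cancel_iff) auto
  then have log_ge: "real k\<^sub>0 \<le> log 2 t"
    by (simp add: log_nat_power)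
  then show "k\<^sub>0 \<le> k"
    unfolding k_def by (simp add: le_nat_floor)
  have "real k \<le> log 2 t" "log 2 t \<le> real k + 1"
    unfolding k_def using log_ge by linarith+
  then have "2 powr real k \<le> 2 powr log 2 t" "2 powr log 2 t \<le> 2 powr real (Suc k)"
    by (auto simp: add.commute)
  then have "2 powr real k \<le> t" "t \<le> 2 powr real (Suc k)"
    using \<open>1 \<le> t\<close> by auto
  then show "t \<in> {2 ^ k..2 ^ Suc k}"
    by (simp only: powr_realpow zero_less_numeral atLeastAtMost_iff)
qed

lemma tendsto_zero_from_dyadic_block_bounds:
  fixes f :: "real \<Rightarrow> real"
  assumes bound: "\<And>k t. k \<ge> k\<^sub>0 \<Longrightarrow> t \<in> {2 ^ k..2 ^ Suc k} \<Longrightarrow> \<bar>f t\<bar> \<le> 2 powr (\<theta> * k)"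
    and "\<theta> < \<gamma>" "0 \<le> \<gamma>"
  shows "((\<lambda>t. f t / t powr \<gamma>) \<longlongrightarrow> 0) at_top"
proof (rule Lim_null_comparison)
  show "((\<lambda>t. 2 powr (\<gamma> - \<theta>) * t powr (\<theta> - \<gamma>)) \<longlongrightarrow> 0) at_top"
    using \<open>\<theta> < \<gamma>\<close> by (intro tendsto_mult_right_zero tendsto_neg_powr filterlim_ident) auto
  have "\<bar>f t / t powr \<gamma>\<bar> \<le> 2 powr (\<gamma> - \<theta>) * t powr (\<theta> - \<gamma>)" if t: "2 ^ k\<^sub>0 \<le> t" for t :: real
  proof -
    obtain k where k: "k\<^sub>0 \<le> k" "t \<in> {2 ^ k..2 ^ Suc k}"
      using dyadic_block_index[OF t] by blast
    have "(0::real) < 2 ^ k"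
      by simp
    then have "0 < t"
      using k(2) unfolding atLeastAtMost_iff by linarith
    have "2 powr (\<gamma> * k) = (2 ^ k) powr \<gamma>"
      by (simp add: powr_powr powr_realpow[symmetric] mult.commute)
    also have "\<dots> \<le> t powr \<gamma>"
      using k(2) \<open>0 \<le> \<gamma>\<close> by (intro powr_mono2) auto
    finally have "\<bar>f t / t powr \<gamma>\<bar> \<le> 2 powr (\<theta> * k) / 2 powr (\<gamma> * k)"
      using bound[OF k] by (simp add: abs_divide frac_le)
    also have "\<dots> = 2 powr ((\<gamma> - \<theta>) + real (Suc k) * (\<theta> - \<gamma>))"
      by (simp add: powr_diff[symmetric] algebra_simps)
    also have "\<dots> = 2 powr (\<gamma> - \<theta>) * (2 ^ Suc k) powr (\<theta> - \<gamma>)"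
      by (simp only: powr_add powr_powr[symmetric] powr_realpow zero_less_numeral)
    also have "\<dots> \<le> 2 powr (\<gamma> - \<theta>) * t powr (\<theta> - \<gamma>)"
      using k(2) \<open>\<theta> < \<gamma>\<close> \<open>0 < t\<close> by (intro mult_left_mono powr_mono2') auto
    finally show ?thesis .
  qed
  then show "\<forall>\<^sub>F t in at_top. norm (f t / t powr \<gamma>) \<le> 2 powr (\<gamma> - \<theta>) * t powr (\<theta> - \<gamma>)"
    unfolding eventually_at_top_linorder by auto
qed

lemma dyadic_block_bound_eq:
  fixes C \<beta> \<theta> :: real and k :: nat
  shows "8 / (2 powr (\<theta> * k))\<^sup>2 * (2 * C * (2 ^ Suc k) powr (2 * \<beta> + 1)) =
    16 * C * 2 powr (2 * \<beta> + 1) * (2 powr (2 * \<beta> + 1 - 2 * \<theta>)) ^ k"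
proof -
  have square: "(2 powr (\<theta> * k))\<^sup>2 = 2 powr (2 * \<theta> * k)"
    by (simp add: power2_eq_square powr_add[symmetric] algebra_simps)
  have "((2::real) ^ Suc k) powr (2 * \<beta> + 1) = (2 powr real (Suc k)) powr (2 * \<beta> + 1)"
    by (simp only: powr_realpow zero_less_numeral)
  also have "\<dots> = 2 powr (2 * \<theta> * k) * (2 powr (2 * \<beta> + 1) * 2 powr ((2 * \<beta> + 1 - 2 * \<theta>) * k))"
    by (simp add: powr_powr powr_add[symmetric] algebra_simps)
  finally have block: "((2::real) ^ Suc k) powr (2 * \<beta> + 1) =
      2 powr (2 * \<theta> * k) * (2 powr (2 * \<beta> + 1) * 2 powr ((2 * \<beta> + 1 - 2 * \<theta>) * k))" .
  have ratio: "(2 powr (2 * \<beta> + 1 - 2 * \<theta>)) ^ k = 2 powr ((2 * \<beta> + 1 - 2 * \<theta>) * k)"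
    by (simp add: powr_realpow[symmetric] powr_powr)
  show ?thesis
    unfolding square block ratio by simp
qed

lemma (in ito_integral) dyadic_block_exceptional_events:
  assumes moments: "\<And>t. t \<ge> 0 \<Longrightarrow> (\<integral>\<^sup>+\<omega>. ennreal ((b t \<omega>)\<^sup>2) \<partial>M) \<le> ennreal (C * (1 + t powr (2 * \<beta>)))"
    and "0 \<le> C" "0 \<le> \<beta>"
  obtains A where "\<And>k. A k \<in> sets M"
    and "\<And>k. measure M (A k) \<le> 16 * C * 2 powr (2 * \<beta> + 1) * (2 powr (2 * \<beta> + 1 - 2 * \<theta>)) ^ k"
    and "\<And>k \<omega> t. \<omega> \<in> space M - A k \<Longrightarrow> continuous_on {0..2 ^ Suc k} (\<lambda>t. I t \<omega>) \<Longrightarrow>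
      t \<in> {0..2 ^ Suc k} \<Longrightarrow> \<bar>I t \<omega>\<bar> \<le> 2 powr (\<theta> * k)"
proof -
  define bound where "bound k = 16 * C * 2 powr (2 * \<beta> + 1) * (2 powr (2 * \<beta> + 1 - 2 * \<theta>)) ^ k" for k :: nat
  have "\<exists>A. A \<in> sets M \<and> measure M A \<le> bound k \<and> (\<forall>\<omega> t. \<omega> \<in> space M - A \<longrightarrow>
      continuous_on {0..2 ^ Suc k} (\<lambda>t. I t \<omega>) \<longrightarrow> t \<in> {0..2 ^ Suc k} \<longrightarrow> \<bar>I t \<omega>\<bar> \<le> 2 powr (\<theta> * k))" for k
  proof -
    obtain A where A: "A \<in> sets M"
      and emeasure_A: "emeasure M A \<le> ennreal (8 / (2 powr (\<theta> * k))\<^sup>2) * mean_square_dist {0..2 ^ Suc k} b (\<lambda>_ _. 0)"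
      and small: "\<And>\<omega> t. \<omega> \<in> space M - A \<Longrightarrow> continuous_on {0..2 ^ Suc k} (\<lambda>t. I t \<omega>) \<Longrightarrow>
        t \<in> {0..2 ^ Suc k} \<Longrightarrow> \<bar>I t \<omega>\<bar> \<le> 2 powr (\<theta> * k)"
      by (rule maximal_inequality[of "2 ^ Suc k" "2 powr (\<theta> * k)"]) auto
    have "mean_square_dist {0..2 ^ Suc k} b (\<lambda>_ _. 0) \<le> ennreal (2 * C * (2 ^ Suc k) powr (2 * \<beta> + 1))"
      using assms(2,3) one_le_power[of "2::real" "Suc k"] by (intro mean_square_dist_b_zero_le[OF moments]) auto
    then have "emeasure M A \<le> ennreal (8 / (2 powr (\<theta> * k))\<^sup>2) * ennreal (2 * C * (2 ^ Suc k) powr (2 * \<beta> + 1))"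
      by (intro order_trans[OF emeasure_A] mult_left_mono) auto
    also have "\<dots> = ennreal (8 / (2 powr (\<theta> * k))\<^sup>2 * (2 * C * (2 ^ Suc k) powr (2 * \<beta> + 1)))"
      by (rule ennreal_mult[symmetric]) (use assms(2) in auto)
    also have "\<dots> = ennreal (bound k)"
      unfolding bound_def dyadic_block_bound_eq ..
    finally have "measure M A \<le> bound k"
      using assms(2) by (simp add: emeasure_eq_measure bound_def)
    with A small show ?thesis
      by blast
  qed
  then show ?thesis
    using that unfolding bound_def by metis
qed

theorem (in ito_integral) ito_integral_growth:
  assumes moments: "\<And>t. t \<ge> 0 \<Longrightarrow> (\<integral>\<^sup>+\<omega>. ennreal ((b t \<omega>)\<^sup>2) \<partial>M) \<le> ennreal (C * (1 + t powr (2 * \<beta>)))"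
    and "0 < C" "0 < \<beta>" "\<beta> + 1 / 2 < \<gamma>"
    and continuous: "AE \<omega> in M. continuous_on {0..} (\<lambda>t. I t \<omega>)"
  shows "AE \<omega> in M. ((\<lambda>t. I t \<omega> / t powr \<gamma>) \<longlongrightarrow> 0) at_top"
proof -
  define \<theta> where "\<theta> = (\<beta> + 1 / 2 + \<gamma>) / 2"
  have "\<beta> + 1 / 2 < \<theta>" "\<theta> < \<gamma>"
    using assms(4) by (auto simp: \<theta>_def)
  define r where "r = 2 powr (2 * \<beta> + 1 - 2 * \<theta>)"
  have "r < 1"
    unfolding r_def using \<open>\<beta> + 1 / 2 < \<theta>\<close> powr_less_mono[of "2 * \<beta> + 1 - 2 * \<theta>" 0 2] by simp
  obtain A where A: "\<And>k. A k \<in> sets M" "\<And>k. measure M (A k) \<le> 16 * C * 2 powr (2 * \<beta> + 1) * r ^ k"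
    and bounded: "\<And>k \<omega> t. \<omega> \<in> space M - A k \<Longrightarrow> continuous_on {0..2 ^ Suc k} (\<lambda>t. I t \<omega>) \<Longrightarrow>
      t \<in> {0..2 ^ Suc k} \<Longrightarrow> \<bar>I t \<omega>\<bar> \<le> 2 powr (\<theta> * k)"
    unfolding r_def using dyadic_block_exceptional_events[OF moments] assms(2,3) by (metis less_imp_le)
  have "summable (\<lambda>k. 16 * C * 2 powr (2 * \<beta> + 1) * r ^ k)"
    using \<open>r < 1\<close> by (intro summable_mult summable_geometric) (simp add: r_def)
  then have "summable (\<lambda>k. measure M (A k))"
    by (rule summable_comparison_test'[where N = 0]) (simp add: A(2))
  then have "AE \<omega> in M. eventually (\<lambda>k. \<omega> \<in> space M - A k) sequentially"
    using A(1) by (intro borel_cantelli_AE1) (auto simp: emeasure_eq_measure)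
  then show ?thesis
    using continuous
  proof eventually_elim
    case (elim \<omega>)
    then obtain k\<^sub>0 where "\<And>k. k \<ge> k\<^sub>0 \<Longrightarrow> \<omega> \<in> space M - A k"
      unfolding eventually_sequentially by blast
    then have "\<bar>I t \<omega>\<bar> \<le> 2 powr (\<theta> * k)" if "k \<ge> k\<^sub>0" "t \<in> {2 ^ k..2 ^ Suc k}" for k t
      using that elim(2) by (intro bounded) (auto intro: continuous_on_subset order_trans[rotated])
    then show ?case
      using \<open>\<theta> < \<gamma>\<close> assms(3,4) by (intro tendsto_zero_from_dyadic_block_bounds) auto
  qed
qed

theorem mainTheorem1:
  fixes M :: "'a measure" and F :: "real \<Rightarrow> 'a measure"
    and B b I :: "real \<Rightarrow> 'a \<Rightarrow> real" and C \<beta> \<gamma> :: real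
  assumes "filtered_prob_space M F"
    and "wiener_process M F B"
    and "progressive F b"
    and "C > 0" and "\<beta> > 0"
    and "\<And>t. t \<ge> 0 \<Longrightarrow> (\<integral>\<^sup>+\<omega>. ennreal ((b t \<omega>)\<^sup>2) \<partial>M) \<le> ennreal (C * (1 + t powr (2 * \<beta>)))"
    and "ito_integral_process M F B b I"
    and "\<gamma> > \<beta> + 1 / 2"
  shows "AE \<omega> in M. ((\<lambda>t. I t \<omega> / t powr \<gamma>) \<longlongrightarrow> 0) at_top"
proof -
  interpret ito_integral M F B b I
    using assms(1-3,7) by unfold_locales (auto simp: ito_integral_process_def)
  show ?thesis
    using assms(4-8) by (intro ito_integral_growth) (auto simp: ito_integral_process_def)
qed

end
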